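(* Let $H$ be a quasi-bialgebra, $\mathcal{A}$ an $H$-bimodule algebra and $\mathbb{A}$ an $H$-bicomodule algebra. Define on $\mathcal{A}\otimes\mathbb{A}$ (elements written $\varphi\natural u$) the product $$(\varphi\natural u)(\psi\natural u')=(\tilde{x}^1_{\lambda}\cdot\varphi\cdot\theta^3u'_{<1>}\tilde{x}^2_{\rho})(\tilde{x}^2_{\lambda}u_{[-1]}\theta^1\cdot\psi\cdot\tilde{x}^3_{\rho})\natural\tilde{x}^3_{\lambda}u_{[0]}\theta^2u'_{<0>}\tilde{x}^1_{\rho}$$ for $\varphi,\psi\in\mathcal{A}$, $u,u'\in\mathbb{A}$. Then this product makes $\mathcal{A}\otimes\mathbb{A}$ an associative algebra with unit $1_{\mathcal{A}}\natural 1_{\mathbb{A}}$ (called the L-R-smash product $\mathcal{A}\natural\mathbb{A}$).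
   Context: Work over a field $k$; $\otimes=\otimes_k$. A quasi-bialgebra is $(H,\Delta,\varepsilon,\Phi)$ where $H$ is a unital associative algebra, $\Delta:H\to H\otimes H$ ($\Delta(h)=h_1\otimes h_2$) and $\varepsilon:H\to k$ are algebra maps, and $\Phi\in H^{\otimes 3}$ is invertible, such that $(id\otimes\Delta)\Delta(h)=\Phi(\Delta\otimes id)(\Delta(h))\Phi^{-1}$, $(id\otimes\varepsilon)\Delta(h)=h\otimes 1$, $(\varepsilon\otimes id)\Delta(h)=1\otimes h$, $(1\otimes\Phi)(id\otimes\Delta\otimes id)(\Phi)(\Phi\otimes 1)=(id\otimes id\otimes\Delta)(\Phi)(\Delta\otimes id\otimes id)(\Phi)$, and $(id\otimes\varepsilon\otimes id)(\Phi)=1\otimes1\otimes1$. Write $\Phi=X^1\otimes X^2\otimes X^3$, $\Phi^{-1}=x^1\otimes x^2\otimes x^3$ (summation implicit). An $H$-bimodule algebra is an $H$-bimodule $\mathcal{A}$ (actions $h\cdot\varphi$, $\varphi\cdot h$) with a bilinear multiplication (not necessarily associative) and unit $1_{\mathcal{A}}$ such that $(\varphi\psi)\xi=(X^1\cdot\varphi\cdot x^1)[(X^2\cdot\psi\cdot x^2)(X^3\cdot\xi\cdot x^3)]$, $h\cdot(\varphi\psi)=(h_1\cdot\varphi)(h_2\cdot\psi)$, $(\varphi\psi)\cdot h=(\varphi\cdot h_1)(\psi\cdot h_2)$, $h\cdot 1_{\mathcal{A}}=1_{\mathcal{A}}\cdot h=\varepsilon(h)1_{\mathcal{A}}$. A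 right $H$-comodule algebra is a unital associative algebra $\mathfrak{A}$ with an algebra map $\rho:\mathfrak{A}\to\mathfrak{A}\otimes H$ and an invertible $\Phi_\rho\in\mathfrak{A}\otimes H\otimes H$ with $\Phi_\rho(\rho\otimes id)\rho(a)=(id\otimes\Delta)\rho(a)\Phi_\rho$, $(1\otimes\Phi)(id\otimes\Delta\otimes id)(\Phi_\rho)(\Phi_\rho\otimes 1)=(id\otimes id\otimes\Delta)(\Phi_\rho)(\rho\otimes id\otimes id)(\Phi_\rho)$, $(id\otimes\varepsilon)\rho=id$, $(id\otimes\varepsilon\otimes id)(\Phi_\rho)=(id\otimes id\otimes\varepsilon)(\Phi_\rho)=1\otimes 1$. A left $H$-comodule algebra is a unital associative algebra $\mathfrak{B}$ with algebra map $\lambda:\mathfrak{B}\to H\otimes\mathfrak{B}$ and invertible $\Phi_\lambda\in H\otimes H\otimes\mathfrak{B}$ with $(id\otimes\lambda)\lambda(b)\Phi_\lambda=\Phi_\lambda(\Delta\otimes id)\lambda(b)$, $(1\otimes\Phi_\lambda)(id\otimes\Delta\otimes id)(\Phi_\lambda)(\Phi\otimes 1)=(id\otimes id\otimes\lambda)(\Phi_\lambda)(\Delta\otimes id\otimes id)(\Phi_\lambda)$, $(\varepsilon\otimes id)\lambda=id$, $(id\otimes\varepsilon\otimes id)(\Phi_\lambda)=(\varepsilon\otimes id\otimes id)(\Phi_\lambda)=1\otimes 1$. An $H$-bicomodule algebra is $(\mathbb{A},\lambda,\rho,\Phi_\lambda,\Phi_\rho,\Phi_{\lambda,\rho})$ with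 $(\mathbb{A},\lambda,\Phi_\lambda)$ a left and $(\mathbb{A},\rho,\Phi_\rho)$ a right $H$-comodule algebra, and $\Phi_{\lambda,\rho}\in H\otimes\mathbb{A}\otimes H$ invertible with $\Phi_{\lambda,\rho}(\lambda\otimes id)\rho(u)=(id\otimes\rho)\lambda(u)\Phi_{\lambda,\rho}$, $(1\otimes\Phi_{\lambda,\rho})(id\otimes\lambda\otimes id)(\Phi_{\lambda,\rho})(\Phi_\lambda\otimes 1)=(id\otimes id\otimes\rho)(\Phi_\lambda)(\Delta\otimes id\otimes id)(\Phi_{\lambda,\rho})$, $(1\otimes\Phi_\rho)(id\otimes\rho\otimes id)(\Phi_{\lambda,\rho})(\Phi_{\lambda,\rho}\otimes 1)=(id\otimes id\otimes\Delta)(\Phi_{\lambda,\rho})(\lambda\otimes id\otimes id)(\Phi_\rho)$. Notation: $\rho(u)=u_{<0>}\otimes u_{<1>}$, $\lambda(u)=u_{[-1]}\otimes u_{[0]}$; $\Phi_\rho^{-1}=\tilde{x}^1_\rho\otimes\tilde{x}^2_\rho\otimes\tilde{x}^3_\rho$, $\Phi_\lambda^{-1}=\tilde{x}^1_\lambda\otimes\tilde{x}^2_\lambda\otimes\tilde{x}^3_\lambda$, $\Phi_{\lambda,\rho}=\Theta^1\otimes\Theta^2\otimes\Theta^3$, $\Phi_{\lambda,\rho}^{-1}=\theta^1\otimes\theta^2\otimes\theta^3$; for $u\in\mathbb{A}$, $(\theta^2)_{[-1]}$ etc. denote coaction components. *)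

theory Defs
  imports Main "HOL-Library.Poly_Mapping"
begin

text \<open>Vector spaces over a field k are modelled as free vector spaces
  'b =>0 'k (finitely supported coefficient functions on a basis 'b).
  The tensor product of the spaces with bases 'a and 'b is the free space on 'a \<times> 'b.
  Linear/bilinear maps are given by their values on basis vectors and extended.\<close>

definition vsc :: "'k::field \<Rightarrow> ('b \<Rightarrow>\<^sub>0 'k) \<Rightarrow> ('b \<Rightarrow>\<^sub>0 'k)" where
  "vsc c x = Poly_Mapping.map (\<lambda>a. c * a) x"

definition bas :: "'b \<Rightarrow> ('b \<Rightarrow>\<^sub>0 'k::field)" where
  "bas i = Poly_Mapping.single i 1"

definition lin :: "('a \<Rightarrow> ('b \<Rightarrow>\<^sub>0 'k::field)) \<Rightarrow> ('a \<Rightarrow>\<^sub>0 'k) \<Rightarrow> ('b \<Rightarrow>\<^sub>0 'k)" where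
  "lin f x = (\<Sum>i\<in>Poly_Mapping.keys x. vsc (Poly_Mapping.lookup x i) (f i))"

definition lfun :: "('a \<Rightarrow> 'k::field) \<Rightarrow> ('a \<Rightarrow>\<^sub>0 'k) \<Rightarrow> 'k" where
  "lfun f x = (\<Sum>i\<in>Poly_Mapping.keys x. Poly_Mapping.lookup x i * f i)"

definition bilin :: "('a \<Rightarrow> 'b \<Rightarrow> ('c \<Rightarrow>\<^sub>0 'k::field)) \<Rightarrow> ('a \<Rightarrow>\<^sub>0 'k) \<Rightarrow> ('b \<Rightarrow>\<^sub>0 'k) \<Rightarrow> ('c \<Rightarrow>\<^sub>0 'k)" where
  "bilin m x y = (\<Sum>i\<in>Poly_Mapping.keys x. \<Sum>j\<in>Poly_Mapping.keys y. vsc (Poly_Mapping.lookup x i * Poly_Mapping.lookup y j) (m i j))"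

definition tens :: "('a \<Rightarrow>\<^sub>0 'k::field) \<Rightarrow> ('b \<Rightarrow>\<^sub>0 'k) \<Rightarrow> ('a \<times> 'b \<Rightarrow>\<^sub>0 'k)" where
  "tens x y = (\<Sum>i\<in>Poly_Mapping.keys x. \<Sum>j\<in>Poly_Mapping.keys y. Poly_Mapping.single (i, j) (Poly_Mapping.lookup x i * Poly_Mapping.lookup y j))"

definition tmap :: "('a \<Rightarrow> ('c \<Rightarrow>\<^sub>0 'k::field)) \<Rightarrow> ('b \<Rightarrow> ('d \<Rightarrow>\<^sub>0 'k)) \<Rightarrow> 'a \<times> 'b \<Rightarrow> ('c \<times> 'd \<Rightarrow>\<^sub>0 'k)" where
  "tmap f g = (\<lambda>(a, b). tens (f a) (g b))"

definition tmult :: "('a \<Rightarrow> 'a \<Rightarrow> ('a \<Rightarrow>\<^sub>0 'k::field)) \<Rightarrow> ('b \<Rightarrow> 'b \<Rightarrow> ('b \<Rightarrow>\<^sub>0 'k))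
    \<Rightarrow> 'a \<times> 'b \<Rightarrow> 'a \<times> 'b \<Rightarrow> ('a \<times> 'b \<Rightarrow>\<^sub>0 'k)" where
  "tmult m n = (\<lambda>(a, b) (c, d). tens (m a c) (n b d))"

definition reas :: "('a \<times> 'b) \<times> 'c \<Rightarrow> ('a \<times> 'b \<times> 'c \<Rightarrow>\<^sub>0 'k::field)" where
  "reas = (\<lambda>((a, b), c). bas (a, (b, c)))"

definition app1 :: "('d \<Rightarrow>\<^sub>0 'k::field) \<Rightarrow> 'a \<times> 'b \<times> 'c \<Rightarrow> ('a \<times> 'b \<times> 'c \<times> 'd \<Rightarrow>\<^sub>0 'k)" where
  "app1 e = (\<lambda>(a, b, c). tens (bas a) (tens (bas b) (tens (bas c) e)))"

definition epsR :: "('h \<Rightarrow> 'k::field) \<Rightarrow> 'a \<times> 'h \<Rightarrow> ('a \<Rightarrow>\<^sub>0 'k)" where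
  "epsR e = (\<lambda>(a, h). vsc (e h) (bas a))"
definition epsL :: "('h \<Rightarrow> 'k::field) \<Rightarrow> 'h \<times> 'a \<Rightarrow> ('a \<Rightarrow>\<^sub>0 'k)" where
  "epsL e = (\<lambda>(h, a). vsc (e h) (bas a))"

definition epsFirst :: "('h \<Rightarrow> 'k::field) \<Rightarrow> 'h \<times> 'b \<times> 'c \<Rightarrow> ('b \<times> 'c \<Rightarrow>\<^sub>0 'k)" where
  "epsFirst e = (\<lambda>(a, b, c). vsc (e a) (tens (bas b) (bas c)))"
definition epsMid :: "('h \<Rightarrow> 'k::field) \<Rightarrow> 'a \<times> 'h \<times> 'c \<Rightarrow> ('a \<times> 'c \<Rightarrow>\<^sub>0 'k)" where
  "epsMid e = (\<lambda>(a, b, c). vsc (e b) (tens (bas a) (bas c)))"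
definition epsLast :: "('h \<Rightarrow> 'k::field) \<Rightarrow> 'a \<times> 'b \<times> 'h \<Rightarrow> ('a \<times> 'b \<Rightarrow>\<^sub>0 'k)" where
  "epsLast e = (\<lambda>(a, b, c). vsc (e c) (tens (bas a) (bas b)))"

definition assoc_alg :: "('a \<Rightarrow> 'a \<Rightarrow> ('a \<Rightarrow>\<^sub>0 'k::field)) \<Rightarrow> ('a \<Rightarrow>\<^sub>0 'k) \<Rightarrow> bool" where
  "assoc_alg m u \<longleftrightarrow>
     (\<forall>x y z. bilin m (bilin m x y) z = bilin m x (bilin m y z)) \<and>
     (\<forall>x. bilin m u x = x \<and> bilin m x u = x)"

definition alg_map :: "('a \<Rightarrow> 'a \<Rightarrow> ('a \<Rightarrow>\<^sub>0 'k::field)) \<Rightarrow> ('a \<Rightarrow>\<^sub>0 'k)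
    \<Rightarrow> ('b \<Rightarrow> 'b \<Rightarrow> ('b \<Rightarrow>\<^sub>0 'k)) \<Rightarrow> ('b \<Rightarrow>\<^sub>0 'k) \<Rightarrow> ('a \<Rightarrow> ('b \<Rightarrow>\<^sub>0 'k)) \<Rightarrow> bool" where
  "alg_map mA uA mB uB f \<longleftrightarrow>
     (\<forall>x y. lin f (bilin mA x y) = bilin mB (lin f x) (lin f y)) \<and> lin f uA = uB"

definition inv_pair :: "('a \<Rightarrow> 'a \<Rightarrow> ('a \<Rightarrow>\<^sub>0 'k::field)) \<Rightarrow> ('a \<Rightarrow>\<^sub>0 'k) \<Rightarrow> ('a \<Rightarrow>\<^sub>0 'k) \<Rightarrow> ('a \<Rightarrow>\<^sub>0 'k) \<Rightarrow> bool" where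
  "inv_pair m u x y \<longleftrightarrow> bilin m x y = u \<and> bilin m y x = u"

text \<open>Quasi-bialgebra (H, m, 1, \<Delta>, \<epsilon>, \<Phi>) with \<Phi>i = \<Phi>^{-1}; H \<otimes> H \<otimes> H is right-nested.\<close>
definition quasi_bialgebra ::
  "('h \<Rightarrow> 'h \<Rightarrow> ('h \<Rightarrow>\<^sub>0 'k::field)) \<Rightarrow> ('h \<Rightarrow>\<^sub>0 'k) \<Rightarrow> ('h \<Rightarrow> ('h \<times> 'h \<Rightarrow>\<^sub>0 'k)) \<Rightarrow> ('h \<Rightarrow> 'k)
   \<Rightarrow> ('h \<times> 'h \<times> 'h \<Rightarrow>\<^sub>0 'k) \<Rightarrow> ('h \<times> 'h \<times> 'h \<Rightarrow>\<^sub>0 'k) \<Rightarrow> bool" where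
  "quasi_bialgebra mH uH D e Phi Phii \<longleftrightarrow>
    (let M3 = tmult mH (tmult mH mH); M4 = tmult mH (tmult mH (tmult mH mH)) in
     assoc_alg mH uH \<and>
     alg_map mH uH (tmult mH mH) (tens uH uH) D \<and>
     (\<forall>x y. lfun e (bilin mH x y) = lfun e x * lfun e y) \<and> lfun e uH = 1 \<and>
     inv_pair M3 (tens uH (tens uH uH)) Phi Phii \<and>
     (\<forall>x. lin (tmap bas D) (lin D x)
          = bilin M3 (bilin M3 Phi (lin reas (lin (tmap D bas) (lin D x)))) Phii) \<and>
     (\<forall>x. lin (epsR e) (lin D x) = x) \<and>
     (\<forall>x. lin (epsL e) (lin D x) = x) \<and>
     bilin M4 (bilin M4 (tens uH Phi) (lin (tmap bas reas) (lin (tmap bas (tmap D bas)) Phi)))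
              (lin (app1 uH) Phi)
       = bilin M4 (lin (tmap bas (tmap bas D)) Phi) (lin reas (lin (tmap D bas) Phi)) \<and>
     lin (epsMid e) Phi = tens uH uH)"

definition bact :: "('h \<Rightarrow> 'a \<Rightarrow> ('a \<Rightarrow>\<^sub>0 'k::field)) \<Rightarrow> ('a \<Rightarrow> 'h \<Rightarrow> ('a \<Rightarrow>\<^sub>0 'k))
    \<Rightarrow> ('h \<Rightarrow>\<^sub>0 'k) \<Rightarrow> ('a \<Rightarrow>\<^sub>0 'k) \<Rightarrow> ('h \<Rightarrow>\<^sub>0 'k) \<Rightarrow> ('a \<Rightarrow>\<^sub>0 'k)" where
  "bact la ra h x h' = bilin ra (bilin la h x) h'"

definition bimodule_algebra ::
  "('h \<Rightarrow> 'h \<Rightarrow> ('h \<Rightarrow>\<^sub>0 'k::field)) \<Rightarrow> ('h \<Rightarrow>\<^sub>0 'k) \<Rightarrow> ('h \<Rightarrow> ('h \<times> 'h \<Rightarrow>\<^sub>0 'k)) \<Rightarrow> ('h \<Rightarrow> 'k)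
   \<Rightarrow> ('h \<times> 'h \<times> 'h \<Rightarrow>\<^sub>0 'k) \<Rightarrow> ('h \<times> 'h \<times> 'h \<Rightarrow>\<^sub>0 'k)
   \<Rightarrow> ('h \<Rightarrow> 'a \<Rightarrow> ('a \<Rightarrow>\<^sub>0 'k)) \<Rightarrow> ('a \<Rightarrow> 'h \<Rightarrow> ('a \<Rightarrow>\<^sub>0 'k))
   \<Rightarrow> ('a \<Rightarrow> 'a \<Rightarrow> ('a \<Rightarrow>\<^sub>0 'k)) \<Rightarrow> ('a \<Rightarrow>\<^sub>0 'k) \<Rightarrow> bool" where
  "bimodule_algebra mH uH D e Phi Phii la ra mA uA \<longleftrightarrow>
     (\<forall>g h x. bilin la g (bilin la h x) = bilin la (bilin mH g h) x) \<and>
     (\<forall>x. bilin la uH x = x) \<and>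
     (\<forall>x g h. bilin ra (bilin ra x g) h = bilin ra x (bilin mH g h)) \<and>
     (\<forall>x. bilin ra x uH = x) \<and>
     (\<forall>g x h. bilin ra (bilin la g x) h = bilin la g (bilin ra x h)) \<and>
     (\<forall>x. bilin mA uA x = x \<and> bilin mA x uA = x) \<and>
     (\<forall>x y z. bilin mA (bilin mA x y) z
        = lin (\<lambda>(X1, X2, X3). lin (\<lambda>(y1, y2, y3).
             bilin mA (bact la ra (bas X1) x (bas y1))
                      (bilin mA (bact la ra (bas X2) y (bas y2)) (bact la ra (bas X3) z (bas y3)))) Phii) Phi) \<and>
     (\<forall>h x y. bilin la h (bilin mA x y)
        = lin (\<lambda>(a, b). bilin mA (bilin la (bas a) x) (bilin la (bas b) y)) (lin D h)) \<and>
     (\<forall>h x y. bilin ra (bilin mA x y) h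
        = lin (\<lambda>(a, b). bilin mA (bilin ra x (bas a)) (bilin ra y (bas b))) (lin D h)) \<and>
     (\<forall>h. bilin la h uA = vsc (lfun e h) uA \<and> bilin ra uA h = vsc (lfun e h) uA)"

definition right_comodule_algebra ::
  "('h \<Rightarrow> 'h \<Rightarrow> ('h \<Rightarrow>\<^sub>0 'k::field)) \<Rightarrow> ('h \<Rightarrow>\<^sub>0 'k) \<Rightarrow> ('h \<Rightarrow> ('h \<times> 'h \<Rightarrow>\<^sub>0 'k)) \<Rightarrow> ('h \<Rightarrow> 'k)
   \<Rightarrow> ('h \<times> 'h \<times> 'h \<Rightarrow>\<^sub>0 'k)
   \<Rightarrow> ('u \<Rightarrow> 'u \<Rightarrow> ('u \<Rightarrow>\<^sub>0 'k)) \<Rightarrow> ('u \<Rightarrow>\<^sub>0 'k) \<Rightarrow> ('u \<Rightarrow> ('u \<times> 'h \<Rightarrow>\<^sub>0 'k))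
   \<Rightarrow> ('u \<times> 'h \<times> 'h \<Rightarrow>\<^sub>0 'k) \<Rightarrow> ('u \<times> 'h \<times> 'h \<Rightarrow>\<^sub>0 'k) \<Rightarrow> bool" where
  "right_comodule_algebra mH uH D e Phi mU uU rho Pr Pri \<longleftrightarrow>
    (let M3 = tmult mU (tmult mH mH); M4 = tmult mU (tmult mH (tmult mH mH)) in
     assoc_alg mU uU \<and>
     alg_map mU uU (tmult mU mH) (tens uU uH) rho \<and>
     inv_pair M3 (tens uU (tens uH uH)) Pr Pri \<and>
     (\<forall>x. bilin M3 Pr (lin reas (lin (tmap rho bas) (lin rho x)))
          = bilin M3 (lin (tmap bas D) (lin rho x)) Pr) \<and>
     bilin M4 (bilin M4 (tens uU Phi) (lin (tmap bas reas) (lin (tmap bas (tmap D bas)) Pr)))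
              (lin (app1 uH) Pr)
       = bilin M4 (lin (tmap bas (tmap bas D)) Pr) (lin reas (lin (tmap rho bas) Pr)) \<and>
     (\<forall>x. lin (epsR e) (lin rho x) = x) \<and>
     lin (epsMid e) Pr = tens uU uH \<and>
     lin (epsLast e) Pr = tens uU uH)"

definition left_comodule_algebra ::
  "('h \<Rightarrow> 'h \<Rightarrow> ('h \<Rightarrow>\<^sub>0 'k::field)) \<Rightarrow> ('h \<Rightarrow>\<^sub>0 'k) \<Rightarrow> ('h \<Rightarrow> ('h \<times> 'h \<Rightarrow>\<^sub>0 'k)) \<Rightarrow> ('h \<Rightarrow> 'k)
   \<Rightarrow> ('h \<times> 'h \<times> 'h \<Rightarrow>\<^sub>0 'k)
   \<Rightarrow> ('u \<Rightarrow> 'u \<Rightarrow> ('u \<Rightarrow>\<^sub>0 'k)) \<Rightarrow> ('u \<Rightarrow>\<^sub>0 'k) \<Rightarrow> ('u \<Rightarrow> ('h \<times> 'u \<Rightarrow>\<^sub>0 'k))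
   \<Rightarrow> ('h \<times> 'h \<times> 'u \<Rightarrow>\<^sub>0 'k) \<Rightarrow> ('h \<times> 'h \<times> 'u \<Rightarrow>\<^sub>0 'k) \<Rightarrow> bool" where
  "left_comodule_algebra mH uH D e Phi mU uU lam Pl Pli \<longleftrightarrow>
    (let M3 = tmult mH (tmult mH mU); M4 = tmult mH (tmult mH (tmult mH mU)) in
     assoc_alg mU uU \<and>
     alg_map mU uU (tmult mH mU) (tens uH uU) lam \<and>
     inv_pair M3 (tens uH (tens uH uU)) Pl Pli \<and>
     (\<forall>x. bilin M3 (lin (tmap bas lam) (lin lam x)) Pl
          = bilin M3 Pl (lin reas (lin (tmap D bas) (lin lam x)))) \<and>
     bilin M4 (bilin M4 (tens uH Pl) (lin (tmap bas reas) (lin (tmap bas (tmap D bas)) Pl)))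
              (lin (app1 uU) Phi)
       = bilin M4 (lin (tmap bas (tmap bas lam)) Pl) (lin reas (lin (tmap D bas) Pl)) \<and>
     (\<forall>x. lin (epsL e) (lin lam x) = x) \<and>
     lin (epsMid e) Pl = tens uH uU \<and>
     lin (epsFirst e) Pl = tens uH uU)"

definition bicomodule_algebra ::
  "('h \<Rightarrow> 'h \<Rightarrow> ('h \<Rightarrow>\<^sub>0 'k::field)) \<Rightarrow> ('h \<Rightarrow>\<^sub>0 'k) \<Rightarrow> ('h \<Rightarrow> ('h \<times> 'h \<Rightarrow>\<^sub>0 'k)) \<Rightarrow> ('h \<Rightarrow> 'k)
   \<Rightarrow> ('h \<times> 'h \<times> 'h \<Rightarrow>\<^sub>0 'k)
   \<Rightarrow> ('u \<Rightarrow> 'u \<Rightarrow> ('u \<Rightarrow>\<^sub>0 'k)) \<Rightarrow> ('u \<Rightarrow>\<^sub>0 'k)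
   \<Rightarrow> ('u \<Rightarrow> ('h \<times> 'u \<Rightarrow>\<^sub>0 'k)) \<Rightarrow> ('u \<Rightarrow> ('u \<times> 'h \<Rightarrow>\<^sub>0 'k))
   \<Rightarrow> ('h \<times> 'h \<times> 'u \<Rightarrow>\<^sub>0 'k) \<Rightarrow> ('h \<times> 'h \<times> 'u \<Rightarrow>\<^sub>0 'k)
   \<Rightarrow> ('u \<times> 'h \<times> 'h \<Rightarrow>\<^sub>0 'k) \<Rightarrow> ('u \<times> 'h \<times> 'h \<Rightarrow>\<^sub>0 'k)
   \<Rightarrow> ('h \<times> 'u \<times> 'h \<Rightarrow>\<^sub>0 'k) \<Rightarrow> ('h \<times> 'u \<times> 'h \<Rightarrow>\<^sub>0 'k) \<Rightarrow> bool" where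
  "bicomodule_algebra mH uH D e Phi mU uU lam rho Pl Pli Pr Pri Plr Plri \<longleftrightarrow>
    (let M3 = tmult mH (tmult mU mH);
         M4 = tmult mH (tmult mH (tmult mU mH));
         N4 = tmult mH (tmult mU (tmult mH mH)) in
     left_comodule_algebra mH uH D e Phi mU uU lam Pl Pli \<and>
     right_comodule_algebra mH uH D e Phi mU uU rho Pr Pri \<and>
     inv_pair M3 (tens uH (tens uU uH)) Plr Plri \<and>
     (\<forall>x. bilin M3 Plr (lin reas (lin (tmap lam bas) (lin rho x)))
          = bilin M3 (lin (tmap bas rho) (lin lam x)) Plr) \<and>
     bilin M4 (bilin M4 (tens uH Plr) (lin (tmap bas reas) (lin (tmap bas (tmap lam bas)) Plr)))
              (lin (app1 uH) Pl)
       = bilin M4 (lin (tmap bas (tmap bas rho)) Pl) (lin reas (lin (tmap D bas) Plr)) \<and>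
     bilin N4 (bilin N4 (tens uH Pr) (lin (tmap bas reas) (lin (tmap bas (tmap rho bas)) Plr)))
              (lin (app1 uH) Plr)
       = bilin N4 (lin (tmap bas (tmap bas D)) Plr) (lin reas (lin (tmap lam bas) Pr)))"

text \<open>The L-R-smash product on basis vectors (f, u), (g, v) of A \<otimes> U:
  (f \<natural> u)(g \<natural> v) = (x\<lambda>1 . f . \<theta>3 v<1> x\<rho>2)(x\<lambda>2 u[-1] \<theta>1 . g . x\<rho>3) \<natural> x\<lambda>3 u[0] \<theta>2 v<0> x\<rho>1,
  where Pli = \<Phi>_\<lambda>^{-1}, Plri = \<Phi>_{\<lambda>,\<rho>}^{-1}, Pri = \<Phi>_\<rho>^{-1}.\<close>
definition smash_mult ::
  "('h \<Rightarrow> 'h \<Rightarrow> ('h \<Rightarrow>\<^sub>0 'k::field)) \<Rightarrow> ('u \<Rightarrow> 'u \<Rightarrow> ('u \<Rightarrow>\<^sub>0 'k))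
   \<Rightarrow> ('h \<Rightarrow> 'a \<Rightarrow> ('a \<Rightarrow>\<^sub>0 'k)) \<Rightarrow> ('a \<Rightarrow> 'h \<Rightarrow> ('a \<Rightarrow>\<^sub>0 'k)) \<Rightarrow> ('a \<Rightarrow> 'a \<Rightarrow> ('a \<Rightarrow>\<^sub>0 'k))
   \<Rightarrow> ('u \<Rightarrow> ('h \<times> 'u \<Rightarrow>\<^sub>0 'k)) \<Rightarrow> ('u \<Rightarrow> ('u \<times> 'h \<Rightarrow>\<^sub>0 'k))
   \<Rightarrow> ('h \<times> 'h \<times> 'u \<Rightarrow>\<^sub>0 'k) \<Rightarrow> ('h \<times> 'u \<times> 'h \<Rightarrow>\<^sub>0 'k) \<Rightarrow> ('u \<times> 'h \<times> 'h \<Rightarrow>\<^sub>0 'k)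
   \<Rightarrow> 'a \<times> 'u \<Rightarrow> 'a \<times> 'u \<Rightarrow> ('a \<times> 'u \<Rightarrow>\<^sub>0 'k)" where
  "smash_mult mH mU la ra mA lam rho Pli Plri Pri = (\<lambda>(f, u) (g, v).
     lin (\<lambda>(l1, l2, l3). lin (\<lambda>(t1, t2, t3). lin (\<lambda>(r1, r2, r3).
       lin (\<lambda>(p, q). lin (\<lambda>(s, w).
         tens (bilin mA (bact la ra (bas l1) (bas f) (bilin mH (bilin mH (bas t3) (bas w)) (bas r2)))
                        (bact la ra (bilin mH (bilin mH (bas l2) (bas p)) (bas t1)) (bas g) (bas r3)))
              (bilin mU (bilin mU (bilin mU (bilin mU (bas l3) (bas q)) (bas t2)) (bas s)) (bas r1))
       ) (rho v)) (lam u)) Pri) Plri) Pli)"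

end

theory Submission
  imports Defs
begin

text \<open>All computations are done on basis vectors, in Sweedler notation. The product of
  \<open>\<phi> \<natural> u\<close> and \<open>\<psi> \<natural> v\<close> is the action on \<open>\<phi>\<close> and \<open>\<psi>\<close> of a single element of
  \<open>H \<otimes> H \<otimes> U \<otimes> H \<otimes> H\<close>, the product of \<open>\<Phi>\<^sub>\<lambda>\<^sup>-\<^sup>1\<close>, \<open>\<lambda>(u)\<close>, \<open>\<Phi>\<^sub>\<lambda>\<^sub>,\<^sub>\<rho>\<^sup>-\<^sup>1\<close>,
  \<open>\<rho>(v)\<close> and \<open>\<Phi>\<^sub>\<rho>\<^sup>-\<^sup>1\<close> placed in suitable tensor slots. Both bracketings of a triple
  product then become the action of an element of \<open>H \<otimes> H \<otimes> H \<otimes> U \<otimes> H \<otimes> H \<otimes> H\<close> on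
  \<open>\<phi>\<close>, \<open>\<psi>\<close>, \<open>\<xi>\<close> (on the left bracketing, the quasi-associativity of \<open>\<A>\<close> contributes
  \<open>\<Phi>\<close> and \<open>\<Phi>\<^sup>-\<^sup>1\<close>), and the two elements coincide by the coassociativity, pentagon and
  compatibility axioms of the bicomodule algebra, each rewritten in terms of the inverse
  reassociators. The unit laws reduce to the counit normalisations of the three reassociators.\<close>

section \<open>Linear algebra on free vector spaces\<close>

lemma lookup_vsc [simp]: "Poly_Mapping.lookup (vsc c x) i = c * Poly_Mapping.lookup x i"
  unfolding vsc_def by (simp add: Poly_Mapping.map.rep_eq when_def)

lemma vsc_add_right [simp]: "vsc c (x + y) = vsc c x + vsc c y"
  by (rule poly_mapping_eqI) (simp add: lookup_add distrib_left)

lemma vsc_add_left: "vsc (c + d) x = vsc c x + vsc d x"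
  by (rule poly_mapping_eqI) (simp add: lookup_add distrib_right)

lemma vsc_vsc [simp]: "vsc c (vsc d x) = vsc (c * d) x"
  by (rule poly_mapping_eqI) (simp add: mult.assoc)

lemma vsc_one [simp]: "vsc 1 x = x"
  by (rule poly_mapping_eqI) simp

lemma vsc_zero_left [simp]: "vsc 0 x = 0"
  by (rule poly_mapping_eqI) simp

lemma vsc_zero_right [simp]: "vsc c 0 = 0"
  by (rule poly_mapping_eqI) simp

lemma vsc_sum: "vsc c (sum f A) = (\<Sum>i\<in>A. vsc c (f i))"
  by (induction A rule: infinite_finite_induct) auto

lemma vsc_single: "vsc c (Poly_Mapping.single i d) = Poly_Mapping.single i (c * d)"
  by (rule poly_mapping_eqI) (simp add: lookup_single when_def)

lemma lookup_bas: "Poly_Mapping.lookup (bas i) j = (if i = j then 1 else 0)"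
  by (simp add: bas_def lookup_single)

lemma lin_eq_sum_superset:
  assumes "finite S" "Poly_Mapping.keys x \<subseteq> S"
  shows "lin f x = (\<Sum>i\<in>S. vsc (Poly_Mapping.lookup x i) (f i))"
  unfolding lin_def using assms by (intro sum.mono_neutral_left) (auto simp: in_keys_iff)

lemma lin_add [simp]: "lin f (x + y) = lin f x + lin f y"
proof -
  let ?S = "Poly_Mapping.keys x \<union> Poly_Mapping.keys y"
  have "lin f (x + y) = (\<Sum>i\<in>?S. vsc (Poly_Mapping.lookup (x + y) i) (f i))"
    using Poly_Mapping.keys_add[of x y] by (intro lin_eq_sum_superset) auto
  also have "\<dots> = (\<Sum>i\<in>?S. vsc (Poly_Mapping.lookup x i) (f i)) + (\<Sum>i\<in>?S. vsc (Poly_Mapping.lookup y i) (f i))"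
    by (simp add: lookup_add vsc_add_left sum.distrib)
  also have "\<dots> = lin f x + lin f y"
    by (subst (1 2) lin_eq_sum_superset[where S = ?S]) auto
  finally show ?thesis .
qed

lemma lin_vsc [simp]: "lin f (vsc c x) = vsc c (lin f x)"
proof -
  have "lin f (vsc c x) = (\<Sum>i\<in>Poly_Mapping.keys x. vsc (Poly_Mapping.lookup (vsc c x) i) (f i))"
    by (intro lin_eq_sum_superset) (auto simp: in_keys_iff)
  then show ?thesis by (simp add: lin_def vsc_sum)
qed

lemma lin_zero [simp]: "lin f 0 = 0"
  by (simp add: lin_def)

lemma lin_bas [simp]: "lin f (bas i) = f i"
  by (simp add: bas_def lin_def)

lemma lin_fun_add: "lin (\<lambda>i. f i + g i) x = lin f x + lin g x"
  by (simp add: lin_def sum.distrib)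

lemma lin_fun_vsc: "lin (\<lambda>i. vsc c (f i)) x = vsc c (lin f x)"
  by (simp add: lin_def vsc_sum mult.commute)

lemma lin_fun_zero [simp]: "lin (\<lambda>i. 0) x = 0"
  by (simp add: lin_def)

definition lin_map :: "(('a \<Rightarrow>\<^sub>0 'k::field) \<Rightarrow> ('b \<Rightarrow>\<^sub>0 'k)) \<Rightarrow> bool" where
  "lin_map L \<longleftrightarrow> (\<forall>x y. L (x + y) = L x + L y) \<and> (\<forall>c x. L (vsc c x) = vsc c (L x))"

lemma lin_map_add: "lin_map L \<Longrightarrow> L (x + y) = L x + L y"
  by (simp add: lin_map_def)

lemma lin_map_vsc: "lin_map L \<Longrightarrow> L (vsc c x) = vsc c (L x)"
  by (simp add: lin_map_def)

lemma lin_map_zero: "lin_map L \<Longrightarrow> L 0 = 0"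
  using lin_map_vsc[of L 0 0] by simp

lemma lin_map_sum: "lin_map L \<Longrightarrow> L (sum f A) = (\<Sum>i\<in>A. L (f i))"
  by (induction A rule: infinite_finite_induct) (auto simp: lin_map_zero lin_map_add)

lemma sum_keys_bas: "(\<Sum>i\<in>Poly_Mapping.keys x. vsc (Poly_Mapping.lookup x i) (bas i)) = x"
  by (rule poly_mapping_eqI)
     (simp add: lookup_sum lookup_bas if_distrib[of "\<lambda>t. _ * t"] sum.delta' in_keys_iff cong: if_cong)

lemma lin_map_eq_lin: "lin_map L \<Longrightarrow> L x = lin (\<lambda>i. L (bas i)) x"
proof -
  assume L: "lin_map L"
  have "L x = L (\<Sum>i\<in>Poly_Mapping.keys x. vsc (Poly_Mapping.lookup x i) (bas i))"
    by (simp only: sum_keys_bas)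
  also have "\<dots> = lin (\<lambda>i. L (bas i)) x"
    using L by (simp add: lin_map_sum lin_map_vsc lin_def)
  finally show ?thesis .
qed

lemma lin_of_lin_map: "lin_map L \<Longrightarrow> lin (\<lambda>i. L (bas i)) x = L x"
  by (simp add: lin_map_eq_lin[symmetric])

lemma lin_map_lin [simp]: "lin_map (lin f)"
  by (simp add: lin_map_def)

lemma lin_bas_eq [simp]: "lin bas x = x"
  by (simp add: lin_def sum_keys_bas)

lemma lin_lin: "lin g (lin f x) = lin (\<lambda>i. lin g (f i)) x"
  by (subst lin_map_eq_lin[of "\<lambda>x. lin g (lin f x)"]) (simp_all add: lin_map_def)

lemma lin_map_lin_fun [simp]: "(\<And>i. lin_map (\<lambda>x. G i x)) \<Longrightarrow> lin_map (\<lambda>x. lin (\<lambda>i. G i x) y)"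
  unfolding lin_map_def by (simp add: lin_fun_add lin_fun_vsc)

lemma lin_swap: "lin (\<lambda>i. lin (\<lambda>j. K i j) y) x = lin (\<lambda>j. lin (\<lambda>i. K i j) x) y"
  by (subst lin_map_eq_lin[of "\<lambda>x. lin (\<lambda>j. lin (\<lambda>i. K i j) x) y"]) simp_all

lemma bilin_eq_lin: "bilin m x y = lin (\<lambda>i. lin (\<lambda>j. m i j) y) x"
  by (simp add: bilin_def lin_def vsc_sum)

lemma tens_eq_bilin: "tens x y = bilin (\<lambda>i j. bas (i, j)) x y"
  by (simp add: tens_def bilin_def bas_def vsc_single)

lemma lin_map_id [simp]: "lin_map (\<lambda>x. x)"
  by (simp add: lin_map_def)

lemma lin_map_comp: "lin_map K \<Longrightarrow> lin_map g \<Longrightarrow> lin_map (\<lambda>a. K (g a))"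
  by (simp add: lin_map_def)

lemma lin_map_lin_comp [simp]: "lin_map g \<Longrightarrow> lin_map (\<lambda>x. lin f (g x))"
  by (rule lin_map_comp) simp_all

lemma lin_map_vsc_comp [simp]: "lin_map g \<Longrightarrow> lin_map (\<lambda>x. vsc c (g x))"
  unfolding lin_map_def by (simp add: lin_map_add[of g] lin_map_vsc[of g] mult.commute)

lemma lin_map_lin_distrib: "lin_map L \<Longrightarrow> L (lin f x) = lin (\<lambda>i. L (f i)) x"
  by (subst lin_map_eq_lin[of "\<lambda>x. L (lin f x)"]) (auto intro: lin_map_comp)

lemma lin_map_eqI: "lin_map F \<Longrightarrow> lin_map G \<Longrightarrow> (\<And>i. F (bas i) = G (bas i)) \<Longrightarrow> F x = G x"
proof -
  assume F: "lin_map F" and G: "lin_map G" and eq: "\<And>i. F (bas i) = G (bas i)"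
  show ?thesis
    unfolding lin_map_eq_lin[OF F, of x] lin_map_eq_lin[OF G, of x] eq ..
qed

lemma bilinear_eqI:
  assumes "\<And>y. lin_map (\<lambda>x. F x y)" "\<And>x. lin_map (\<lambda>y. F x y)"
    and "\<And>y. lin_map (\<lambda>x. G x y)" "\<And>x. lin_map (\<lambda>y. G x y)"
    and "\<And>i j. F (bas i) (bas j) = G (bas i) (bas j)"
  shows "F x y = G x y"
proof (rule lin_map_eqI[of "\<lambda>x. F x y"])
  show "F (bas i) y = G (bas i) y" for i
    by (rule lin_map_eqI[of "F (bas i)"]) (use assms in simp_all)
qed (use assms in simp_all)

lemma trilinear_eqI:
  assumes "\<And>y z. lin_map (\<lambda>x. F x y z)" "\<And>x z. lin_map (\<lambda>y. F x y z)" "\<And>x y. lin_map (\<lambda>z. F x y z)"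
    and "\<And>y z. lin_map (\<lambda>x. G x y z)" "\<And>x z. lin_map (\<lambda>y. G x y z)" "\<And>x y. lin_map (\<lambda>z. G x y z)"
    and "\<And>i j k. F (bas i) (bas j) (bas k) = G (bas i) (bas j) (bas k)"
  shows "F x y z = G x y z"
proof (rule lin_map_eqI[of "\<lambda>x. F x y z"])
  show "F (bas i) y z = G (bas i) y z" for i
    by (rule bilinear_eqI[of "F (bas i)"]) (use assms in simp_all)
qed (use assms in simp_all)

lemma bilin_add_left [simp]: "bilin m (x + x') y = bilin m x y + bilin m x' y"
  by (simp add: bilin_eq_lin)

lemma bilin_vsc_left [simp]: "bilin m (vsc c x) y = vsc c (bilin m x y)"
  by (simp add: bilin_eq_lin)

lemma bilin_add_right [simp]: "bilin m x (y + y') = bilin m x y + bilin m x y'"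
  by (simp add: bilin_eq_lin lin_fun_add)

lemma bilin_vsc_right [simp]: "bilin m x (vsc c y) = vsc c (bilin m x y)"
  by (simp add: bilin_eq_lin lin_fun_vsc)

lemma bilin_zero_left [simp]: "bilin m 0 y = 0"
  by (simp add: bilin_eq_lin)

lemma bilin_zero_right [simp]: "bilin m x 0 = 0"
  by (simp add: bilin_eq_lin)

lemma bilin_bas [simp]: "bilin m (bas i) (bas j) = m i j"
  by (simp add: bilin_eq_lin)

lemma lin_map_bilin_left [simp]: "lin_map g \<Longrightarrow> lin_map (\<lambda>x. bilin m (g x) y)"
  unfolding lin_map_def by (simp add: lin_map_add[of g] lin_map_vsc[of g])

lemma lin_map_bilin_right [simp]: "lin_map g \<Longrightarrow> lin_map (\<lambda>x. bilin m y (g x))"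
  unfolding lin_map_def by (simp add: lin_map_add[of g] lin_map_vsc[of g])

lemma tens_add_left [simp]: "tens (x + x') y = tens x y + tens x' y"
  by (simp add: tens_eq_bilin)

lemma tens_vsc_left [simp]: "tens (vsc c x) y = vsc c (tens x y)"
  by (simp add: tens_eq_bilin)

lemma tens_add_right [simp]: "tens x (y + y') = tens x y + tens x y'"
  by (simp add: tens_eq_bilin)

lemma tens_vsc_right [simp]: "tens x (vsc c y) = vsc c (tens x y)"
  by (simp add: tens_eq_bilin)

lemma tens_zero_left [simp]: "tens 0 y = 0"
  by (simp add: tens_eq_bilin)

lemma tens_zero_right [simp]: "tens x 0 = 0"
  by (simp add: tens_eq_bilin)

lemma tens_bas [simp]: "tens (bas i) (bas j) = bas (i, j)"
  by (simp add: tens_eq_bilin)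

lemma lin_map_tens_left [simp]: "lin_map g \<Longrightarrow> lin_map (\<lambda>x. tens (g x) y)"
  unfolding lin_map_def by (simp add: lin_map_add[of g] lin_map_vsc[of g])

lemma lin_map_tens_right [simp]: "lin_map g \<Longrightarrow> lin_map (\<lambda>x. tens y (g x))"
  unfolding lin_map_def by (simp add: lin_map_add[of g] lin_map_vsc[of g])

lemma lin_map_case_prod [simp]:
  "(\<And>a b. lin_map (\<lambda>x. G a b x)) \<Longrightarrow> lin_map (\<lambda>x. case p of (a, b) \<Rightarrow> G a b x)"
  by (cases p) simp

lemma lin_tens: "lin G (tens x y) = lin (\<lambda>i. lin (\<lambda>j. G (i, j)) y) x"
  by (simp add: tens_eq_bilin bilin_eq_lin lin_lin)

lemma tens_lin_left: "tens (lin f x) y = lin (\<lambda>i. tens (f i) y) x"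
  by (rule lin_map_lin_distrib) simp

lemma tens_lin_right: "tens x (lin f y) = lin (\<lambda>i. tens x (f i)) y"
  by (rule lin_map_lin_distrib[of "\<lambda>v. tens x v"]) simp

section \<open>Sweedler sums\<close>

text \<open>For \<open>T = \<Sum> t\<^sub>1 \<otimes> t\<^sub>2\<close>, \<open>sw T F\<close> is the Sweedler sum \<open>\<Sum> F t\<^sub>1 t\<^sub>2\<close>; it does not
  depend on the chosen representation of \<open>T\<close> as long as \<open>F\<close> is bilinear.\<close>

definition sw :: "('a \<times> 'b \<Rightarrow>\<^sub>0 'k::field) \<Rightarrow> (('a \<Rightarrow>\<^sub>0 'k) \<Rightarrow> ('b \<Rightarrow>\<^sub>0 'k) \<Rightarrow> ('c \<Rightarrow>\<^sub>0 'k))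
    \<Rightarrow> ('c \<Rightarrow>\<^sub>0 'k)" where
  "sw T F = lin (\<lambda>(a, b). F (bas a) (bas b)) T"

abbreviation sw3 where "sw3 T F \<equiv> sw T (\<lambda>a y. sw y (\<lambda>b c. F a b c))"
abbreviation sw4 where "sw4 T F \<equiv> sw T (\<lambda>a y. sw3 y (\<lambda>b c d. F a b c d))"

lemma sw_eq_lin: "sw T F = lin (\<lambda>p. F (bas (fst p)) (bas (snd p))) T"
  by (simp add: sw_def case_prod_unfold)

lemma lin_map_sw_fun [simp]: "(\<And>a b. lin_map (\<lambda>x. G a b x)) \<Longrightarrow> lin_map (\<lambda>x. sw T (\<lambda>a b. G a b x))"
  unfolding sw_def by (rule lin_map_lin_fun) simp

lemma lin_map_sw_arg [simp]: "lin_map g \<Longrightarrow> lin_map (\<lambda>x. sw (g x) F)"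
  unfolding sw_def by simp

lemma sw_bas [simp]: "sw (bas (i, j)) F = F (bas i) (bas j)"
  by (simp add: sw_def)

lemma sw_add [simp]: "sw (x + y) F = sw x F + sw y F"
  by (simp add: sw_def)

lemma sw_vsc [simp]: "sw (vsc c x) F = vsc c (sw x F)"
  by (simp add: sw_def)

lemma sw_zero [simp]: "sw 0 F = 0"
  by (simp add: sw_def)

lemma sw_tens [simp]:
  assumes "\<And>b. lin_map (\<lambda>a. F a b)" "\<And>a. lin_map (\<lambda>b. F a b)"
  shows "sw (tens x y) F = F x y"
proof -
  have "sw (tens x y) F = lin (\<lambda>i. lin (\<lambda>j. F (bas i) (bas j)) y) x"
    by (simp add: sw_def lin_tens)
  also have "\<dots> = F x y"
    using lin_of_lin_map[OF assms(2)] lin_of_lin_map[OF assms(1)] by simp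
  finally show ?thesis .
qed

lemma sw_tens_bas_left [simp]: "lin_map (F (bas i)) \<Longrightarrow> sw (tens (bas i) y) F = F (bas i) y"
  by (simp add: sw_def lin_tens lin_of_lin_map)

lemma sw_tens_eq: "sw T tens = T"
  by (rule lin_map_eqI[where F = "\<lambda>T. sw T tens"]) (auto simp: split_paired_all)

lemma lin_map_sw_distrib: "lin_map L \<Longrightarrow> L (sw T F) = sw T (\<lambda>a b. L (F a b))"
  unfolding sw_def by (simp add: lin_map_lin_distrib[of L] prod.case_distrib)

lemma sw_swap: "sw T (\<lambda>a b. sw S (\<lambda>c d. K a b c d)) = sw S (\<lambda>c d. sw T (\<lambda>a b. K a b c d))"
  unfolding sw_def case_prod_unfold by (rule lin_swap)

lemma sw3_sw_swap: "sw3 T (\<lambda>a b c. sw S (\<lambda>d e. K a b c d e)) = sw S (\<lambda>d e. sw3 T (\<lambda>a b c. K a b c d e))"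
  by (subst sw_swap) (subst sw_swap, rule refl)

lemma sw4_sw_swap:
  "sw4 T (\<lambda>a b c x. sw S (\<lambda>d e. K a b c x d e)) = sw S (\<lambda>d e. sw4 T (\<lambda>a b c x. K a b c x d e))"
  by (subst sw3_sw_swap[symmetric]) (subst sw_swap, rule refl)

lemma sw_fun_vsc: "sw T (\<lambda>a b. vsc c (F a b)) = vsc c (sw T F)"
  unfolding sw_def case_prod_unfold by (rule lin_fun_vsc)

lemma bilin_sw_left [simp]: "bilin M (sw T F) Y = sw T (\<lambda>a b. bilin M (F a b) Y)"
  by (rule lin_map_sw_distrib) simp

lemma bilin_sw_right [simp]: "bilin M X (sw T F) = sw T (\<lambda>a b. bilin M X (F a b))"
  by (rule lin_map_sw_distrib[of "\<lambda>v. bilin M X v"]) simp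

lemma sw_sw [simp]: "sw (sw T F) G = sw T (\<lambda>a b. sw (F a b) G)"
  by (rule lin_map_sw_distrib[of "\<lambda>v. sw v G"]) simp

lemma tens_sw_left [simp]: "tens (sw T F) y = sw T (\<lambda>a b. tens (F a b) y)"
  by (rule lin_map_sw_distrib[of "\<lambda>v. tens v y"]) simp

lemma tens_sw_right [simp]: "tens x (sw T F) = sw T (\<lambda>a b. tens x (F a b))"
  by (rule lin_map_sw_distrib[of "\<lambda>v. tens x v"]) simp

lemma lin_sw [simp]: "lin f (sw T F) = sw T (\<lambda>a b. lin f (F a b))"
  by (rule lin_map_sw_distrib[of "\<lambda>v. lin f v"]) simp

lemma sw_tens_right_eq: "sw T (\<lambda>x y. tens z (tens x y)) = tens z T"
  using tens_sw_right[of z T tens] by (simp add: sw_tens_eq)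

lemma tmult_bas [simp]: "tmult m n (a, b) (c, d) = tens (m a c) (n b d)"
  by (simp add: tmult_def)

lemma tmult_tens [simp]: "bilin (tmult m n) (tens x y) (tens x' y') = tens (bilin m x x') (bilin n y y')"
proof -
  have "bilin (tmult m n) (tens x y) (tens x' y') =
     lin (\<lambda>i. lin (\<lambda>j. lin (\<lambda>k. lin (\<lambda>l. tens (m i k) (n j l)) y') x') y) x"
    unfolding bilin_eq_lin lin_tens by simp
  also have "\<dots> = lin (\<lambda>i. lin (\<lambda>k. lin (\<lambda>j. lin (\<lambda>l. tens (m i k) (n j l)) y') y) x') x"
    by (simp only: lin_swap[of _ x' y])
  also have "\<dots> = tens (bilin m x x') (bilin n y y')"
    by (simp only: bilin_eq_lin tens_lin_left, simp only: tens_lin_right)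
  finally show ?thesis .
qed

lemma sw_tmult [simp]:
  assumes "\<And>b. lin_map (\<lambda>a. F a b)" "\<And>a. lin_map (\<lambda>b. F a b)"
  shows "sw (bilin (tmult m n) X Y) F = sw X (\<lambda>a b. sw Y (\<lambda>c d. F (bilin m a c) (bilin n b d)))"
proof -
  have "sw (bilin (tmult m n) X Y) F = lin (\<lambda>p. lin (\<lambda>q. sw (tmult m n p q) F) Y) X"
    unfolding bilin_eq_lin sw_def lin_lin ..
  also have "\<dots> = lin (\<lambda>p. lin (\<lambda>q. F (m (fst p) (fst q)) (n (snd p) (snd q))) Y) X"
    by (simp add: tmult_def case_prod_unfold assms)
  also have "\<dots> = sw X (\<lambda>a b. sw Y (\<lambda>c d. F (bilin m a c) (bilin n b d)))"
    by (simp add: sw_eq_lin)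
  finally show ?thesis .
qed

lemma tmap_pair [simp]: "tmap f g (a, b) = tens (f a) (g b)"
  by (simp add: tmap_def)

lemma sw_tmap [simp]:
  assumes "\<And>b. lin_map (\<lambda>a. F a b)" "\<And>a. lin_map (\<lambda>b. F a b)"
  shows "sw (lin (tmap f g) X) F = sw X (\<lambda>a b. F (lin f a) (lin g b))"
proof -
  have "sw (lin (tmap f g) X) F = lin (\<lambda>p. sw (tens (f (fst p)) (g (snd p))) F) X"
    unfolding sw_eq_lin lin_lin by (simp add: tmap_def case_prod_unfold)
  also have "\<dots> = sw X (\<lambda>a b. F (lin f a) (lin g b))"
    by (simp add: assms, simp add: sw_eq_lin)
  finally show ?thesis .
qed

lemma lin_tmap_tens [simp]: "lin (tmap f g) (tens x y) = tens (lin f x) (lin g y)"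
  using sw_tmap[of tens f g "tens x y"] by (simp add: sw_tens_eq)

lemma reas_bas [simp]: "reas ((a, b), c) = bas (a, b, c)"
  by (simp add: reas_def)

lemma sw_reas [simp]: "sw (lin reas Y) F = sw Y (\<lambda>ab c. sw ab (\<lambda>a b. F a (tens b c)))"
  by (rule lin_map_eqI[where F = "\<lambda>Y. sw (lin reas Y) F"]) (auto simp: split_paired_all)

lemma lin_reas_tens [simp]: "lin reas (tens (tens x y) z) = tens x (tens y z)"
  using sw_reas[where F = tens and Y = "tens (tens x y) z"] by (simp add: sw_tens_eq)

lemma app1_bas [simp]: "app1 e (a, b, c) = tens (bas a) (tens (bas b) (tens (bas c) e))"
  by (simp add: app1_def)

lemma sw_app1 [simp]:
  assumes "\<And>a b c. lin_map (\<lambda>d. F a b c d)"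
  shows "sw4 (lin (app1 e) X) F = sw3 X (\<lambda>a b c. F a b c e)"
  by (rule lin_map_eqI[where F = "\<lambda>X. sw4 (lin (app1 e) X) F"]) (auto simp: split_paired_all assms)

lemma lin_app1_eq_sw: "lin (app1 e) T = sw3 T (\<lambda>a b c. tens a (tens b (tens c e)))"
  by (rule lin_map_eqI[where F = "lin (app1 e)"]) (simp_all add: split_paired_all)

lemma lin_app1_tens [simp]: "lin (app1 e) (tens x (tens y z)) = tens x (tens y (tens z e))"
  by (simp add: lin_app1_eq_sw)

lemma assoc_alg_tmult:
  assumes "assoc_alg m u" "assoc_alg n v"
  shows "assoc_alg (tmult m n) (tens u v)"
proof -
  have m: "bilin m (bilin m x y) z = bilin m x (bilin m y z)" "bilin m u x = x" "bilin m x u = x" for x y z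
    using assms(1) unfolding assoc_alg_def by auto
  have n: "bilin n (bilin n x y) z = bilin n x (bilin n y z)" "bilin n v x = x" "bilin n x v = x" for x y z
    using assms(2) unfolding assoc_alg_def by auto
  have "bilin (tmult m n) (bilin (tmult m n) x y) z = bilin (tmult m n) x (bilin (tmult m n) y z)" for x y z
    by (rule trilinear_eqI[where F = "\<lambda>x y z. bilin (tmult m n) (bilin (tmult m n) x y) z"])
       (simp_all add: split_paired_all m(1) n(1) flip: tens_bas del: bilin_bas)
  moreover have "bilin (tmult m n) (tens u v) x = x" for x
    by (rule lin_map_eqI[where F = "\<lambda>x. bilin (tmult m n) (tens u v) x"])
       (simp_all add: split_paired_all m n flip: tens_bas del: tmult_bas)
  moreover have "bilin (tmult m n) x (tens u v) = x" for x
    by (rule lin_map_eqI[where F = "\<lambda>x. bilin (tmult m n) x (tens u v)"])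
       (simp_all add: split_paired_all m n flip: tens_bas del: tmult_bas)
  ultimately show ?thesis
    unfolding assoc_alg_def by blast
qed

definition multiplicative ::
  "('a \<Rightarrow> ('b \<Rightarrow>\<^sub>0 'k::field)) \<Rightarrow> ('a \<Rightarrow> 'a \<Rightarrow> ('a \<Rightarrow>\<^sub>0 'k)) \<Rightarrow> ('b \<Rightarrow> 'b \<Rightarrow> ('b \<Rightarrow>\<^sub>0 'k)) \<Rightarrow> bool" where
  "multiplicative f m m' \<longleftrightarrow> (\<forall>x y. lin f (bilin m x y) = bilin m' (lin f x) (lin f y))"

lemma multiplicative_iff_bas: "multiplicative f m m' \<longleftrightarrow> (\<forall>i j. lin f (m i j) = bilin m' (f i) (f j))"
proof
  assume "multiplicative f m m'"
  then show "\<forall>i j. lin f (m i j) = bilin m' (f i) (f j)"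
    unfolding multiplicative_def by (metis bilin_bas lin_bas)
next
  assume h: "\<forall>i j. lin f (m i j) = bilin m' (f i) (f j)"
  have "lin f (bilin m x y) = bilin m' (lin f x) (lin f y)" for x y
    by (rule bilinear_eqI[where F = "\<lambda>x y. lin f (bilin m x y)"]) (simp_all add: h)
  then show "multiplicative f m m'"
    unfolding multiplicative_def by blast
qed

lemma multiplicative_bas: "multiplicative bas m m"
  by (simp add: multiplicative_def)

lemma multiplicative_tmap:
  assumes "multiplicative f m m'" "multiplicative g n n'"
  shows "multiplicative (tmap f g) (tmult m n) (tmult m' n')"
  using assms unfolding multiplicative_iff_bas split_paired_All by simp

lemma multiplicative_reas: "multiplicative reas (tmult (tmult m n) p) (tmult m (tmult n p))"
  unfolding multiplicative_iff_bas split_paired_All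
  by (simp only: tmult_bas tens_bas[symmetric] reas_bas tmult_tens lin_reas_tens) simp

lemma multiplicative_app1:
  assumes "bilin m4 e e = e"
  shows "multiplicative (app1 e) (tmult m1 (tmult m2 m3)) (tmult m1 (tmult m2 (tmult m3 m4)))"
  unfolding multiplicative_iff_bas split_paired_All
  using assms by (simp only: tmult_bas app1_bas tmult_tens lin_app1_tens, simp)

lemma inv_pairD: "inv_pair M u x y \<Longrightarrow> bilin M x y = u" "inv_pair M u x y \<Longrightarrow> bilin M y x = u"
  by (auto simp: inv_pair_def)

lemma inv_pair_map:
  assumes "inv_pair M u x y" "multiplicative f M M'" "lin f u = u'"
  shows "inv_pair M' u' (lin f x) (lin f y)"
  using assms unfolding inv_pair_def multiplicative_def by metis

lemma inv_pair_tens_left: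
  assumes "inv_pair M u x y" "bilin m e e = e"
  shows "inv_pair (tmult m M) (tens e u) (tens e x) (tens e y)"
  using assms unfolding inv_pair_def by simp

context
  fixes M :: "'a \<Rightarrow> 'a \<Rightarrow> ('a \<Rightarrow>\<^sub>0 'k::field)" and u
  assumes assoc: "assoc_alg M u"
begin

lemma assoc_algD: "bilin M (bilin M x y) z = bilin M x (bilin M y z)" "bilin M u x = x" "bilin M x u = x"
  using assoc unfolding assoc_alg_def by auto

lemma inv_pair_cancel:
  "inv_pair M u x y \<Longrightarrow> bilin M x (bilin M y z) = z"
  "inv_pair M u x y \<Longrightarrow> bilin M y (bilin M x z) = z"
  by (simp_all add: assoc_algD(2) inv_pairD flip: assoc_algD(1))

lemma inv_pair_solve_left:
  "inv_pair M u c c' \<Longrightarrow> bilin M (bilin M c' b) a = X \<Longrightarrow> bilin M c X = bilin M b a"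
  using inv_pair_cancel assoc_algD by metis

lemma mult_eq_extend2:
  "bilin M X Y = bilin M V W \<Longrightarrow> bilin M X (bilin M Y Z) = bilin M V (bilin M W Z)"
  by (metis assoc_algD(1))

lemma mult_eq_extend3:
  "bilin M X (bilin M Y W) = bilin M V W' \<Longrightarrow> bilin M X (bilin M Y (bilin M W Z)) = bilin M V (bilin M W' Z)"
  by (metis assoc_algD(1))

lemma inv_pair_fix_right: "inv_pair M u p p' \<Longrightarrow> bilin M p y = p \<Longrightarrow> y = u"
  by (metis inv_pair_cancel(2) inv_pairD(2))

lemma inv_pair_fix_left: "inv_pair M u p p' \<Longrightarrow> bilin M y p = p \<Longrightarrow> y = u"
  by (metis assoc_algD(1,3) inv_pairD(1))

lemma inv_pair_invert_eq:
  assumes "inv_pair M u a a'" "inv_pair M u b b'" "inv_pair M u c c'" "inv_pair M u d d'" "inv_pair M u e e'"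
    and abc: "bilin M (bilin M a b) c = bilin M d e"
  shows "bilin M (bilin M c' b') a' = bilin M e' d'"
proof -
  have abcX: "bilin M a (bilin M b (bilin M c X)) = bilin M d (bilin M e X)" for X
    using arg_cong[OF abc, of "\<lambda>t. bilin M t X"] by (simp add: assoc_algD(1))
  have "bilin M e' d' = bilin M e' (bilin M d' (bilin M a (bilin M b (bilin M c (bilin M c' (bilin M b' a'))))))"
    using assms(1-3) by (simp add: inv_pair_cancel assoc_algD(3) inv_pairD)
  also have "\<dots> = bilin M c' (bilin M b' a')"
    unfolding abcX using assms(4,5) by (simp add: inv_pair_cancel)
  finally show ?thesis by (simp add: assoc_algD(1))
qed

lemma inv_pair_conj_left:
  assumes "inv_pair M u p p'" "bilin M x p = bilin M p y"
  shows "bilin M p' x = bilin M y p'"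
proof -
  have "bilin M p' x = bilin M p' (bilin M x (bilin M p p'))"
    using assms(1) by (simp add: assoc_algD inv_pairD)
  also have "\<dots> = bilin M p' (bilin M p (bilin M y p'))"
    using assms(2) by (simp flip: assoc_algD(1))
  also have "\<dots> = bilin M y p'"
    using assms(1) by (simp add: inv_pair_cancel)
  finally show ?thesis .
qed

lemma inv_pair_conj_right:
  assumes "inv_pair M u p p'" "bilin M p x = bilin M y p"
  shows "bilin M x p' = bilin M p' y"
proof -
  have "bilin M x p' = bilin M p' (bilin M p (bilin M x p'))"
    using assms(1) by (simp add: inv_pair_cancel)
  also have "\<dots> = bilin M p' (bilin M y (bilin M p p'))"
    using assms(2) by (simp flip: assoc_algD(1))
  also have "\<dots> = bilin M p' y"
    using assms(1) by (simp add: assoc_algD inv_pairD)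
  finally show ?thesis .
qed

end

lemma hom_inv_pair_unit:
  assumes "assoc_alg M' u'" and hom: "\<And>X Y. \<phi> (bilin M X Y) = bilin M' (\<phi> X) (\<phi> Y)"
    and "inv_pair M u P P'" "\<phi> u = u'" "\<phi> P = u'"
  shows "\<phi> P' = u'"
proof -
  have "\<phi> P' = bilin M' (\<phi> P) (\<phi> P')"
    using assms(1,5) unfolding assoc_alg_def by simp
  also have "\<dots> = \<phi> (bilin M P P')"
    by (simp add: hom)
  also have "\<dots> = u'"
    using assms(3,4) unfolding inv_pair_def by simp
  finally show ?thesis .
qed

text \<open>\<open>split_first f X\<close> applies \<open>f\<close> to the first tensor factor of \<open>X\<close>; thus \<open>split_first D X\<close> is
  the paper's \<open>(\<Delta> \<otimes> id \<otimes> id)(X)\<close>, \<open>split_mid lam X\<close> is \<open>(id \<otimes> \<lambda> \<otimes> id)(X)\<close>, and so on.\<close>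

definition split_first :: "('a \<Rightarrow> ('b \<times> 'c \<Rightarrow>\<^sub>0 'k::field)) \<Rightarrow> ('a \<times> 'd \<Rightarrow>\<^sub>0 'k) \<Rightarrow> ('b \<times> 'c \<times> 'd \<Rightarrow>\<^sub>0 'k)" where
  "split_first f X = lin reas (lin (tmap f bas) X)"

definition split_snd :: "('b \<Rightarrow> ('c \<times> 'd \<Rightarrow>\<^sub>0 'k::field)) \<Rightarrow> ('a \<times> 'b \<Rightarrow>\<^sub>0 'k) \<Rightarrow> ('a \<times> 'c \<times> 'd \<Rightarrow>\<^sub>0 'k)" where
  "split_snd f X = lin (tmap bas f) X"

definition split_mid ::
  "('b \<Rightarrow> ('c \<times> 'd \<Rightarrow>\<^sub>0 'k::field)) \<Rightarrow> ('a \<times> 'b \<times> 'e \<Rightarrow>\<^sub>0 'k) \<Rightarrow> ('a \<times> 'c \<times> 'd \<times> 'e \<Rightarrow>\<^sub>0 'k)" where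
  "split_mid f X = lin (tmap bas reas) (lin (tmap bas (tmap f bas)) X)"

definition split_last ::
  "('c \<Rightarrow> ('d \<times> 'e \<Rightarrow>\<^sub>0 'k::field)) \<Rightarrow> ('a \<times> 'b \<times> 'c \<Rightarrow>\<^sub>0 'k) \<Rightarrow> ('a \<times> 'b \<times> 'd \<times> 'e \<Rightarrow>\<^sub>0 'k)" where
  "split_last f X = lin (tmap bas (tmap bas f)) X"

lemma sw3_split_first:
  assumes "\<And>b c. lin_map (\<lambda>a. K a b c)" "\<And>a c. lin_map (\<lambda>b. K a b c)" "\<And>a b. lin_map (\<lambda>c. K a b c)"
  shows "sw3 (split_first f X) K = sw X (\<lambda>a b. sw (lin f a) (\<lambda>a1 a2. K a1 a2 b))"
  unfolding split_first_def using assms by simp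

lemma sw4_split_first:
  assumes "\<And>b c d. lin_map (\<lambda>a. K a b c d)" "\<And>a c d. lin_map (\<lambda>b. K a b c d)"
    and "\<And>a b d. lin_map (\<lambda>c. K a b c d)" "\<And>a b c. lin_map (\<lambda>d. K a b c d)"
  shows "sw4 (split_first f X) K = sw3 X (\<lambda>a b c. sw (lin f a) (\<lambda>a1 a2. K a1 a2 b c))"
  unfolding split_first_def using assms by (simp add: sw_swap[of "lin f _"])

lemma sw3_split_snd:
  assumes "\<And>b c. lin_map (\<lambda>a. K a b c)" "\<And>a c. lin_map (\<lambda>b. K a b c)" "\<And>a b. lin_map (\<lambda>c. K a b c)"
  shows "sw3 (split_snd f X) K = sw X (\<lambda>a b. sw (lin f b) (\<lambda>b1 b2. K a b1 b2))"
  unfolding split_snd_def using assms by simp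

lemma sw4_split_mid:
  assumes "\<And>b c d. lin_map (\<lambda>a. K a b c d)" "\<And>a c d. lin_map (\<lambda>b. K a b c d)"
    and "\<And>a b d. lin_map (\<lambda>c. K a b c d)" "\<And>a b c. lin_map (\<lambda>d. K a b c d)"
  shows "sw4 (split_mid f X) K = sw3 X (\<lambda>a b c. sw (lin f b) (\<lambda>b1 b2. K a b1 b2 c))"
  unfolding split_mid_def using assms by (simp add: sw_swap[of "lin f _"])

lemma sw4_split_last:
  assumes "\<And>b c d. lin_map (\<lambda>a. K a b c d)" "\<And>a c d. lin_map (\<lambda>b. K a b c d)"
    and "\<And>a b d. lin_map (\<lambda>c. K a b c d)" "\<And>a b c. lin_map (\<lambda>d. K a b c d)"
  shows "sw4 (split_last f X) K = sw3 X (\<lambda>a b c. sw (lin f c) (\<lambda>c1 c2. K a b c1 c2))"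
  unfolding split_last_def using assms by simp

lemma inv_pair_split_first:
  assumes "inv_pair (tmult ma mr) (tens ua ur) X X'" "multiplicative f ma (tmult mb mc)" "lin f ua = tens ub uc"
  shows "inv_pair (tmult mb (tmult mc mr)) (tens ub (tens uc ur)) (split_first f X) (split_first f X')"
proof -
  have "inv_pair (tmult (tmult mb mc) mr) (tens (tens ub uc) ur) (lin (tmap f bas) X) (lin (tmap f bas) X')"
    using assms by (intro inv_pair_map[OF assms(1)] multiplicative_tmap multiplicative_bas) simp_all
  then show ?thesis
    unfolding split_first_def by (rule inv_pair_map[OF _ multiplicative_reas]) simp
qed

lemma inv_pair_split_mid:
  assumes "inv_pair (tmult ma (tmult mb me)) (tens ua (tens ub ue)) X X'"
    and "multiplicative f mb (tmult mc md)" "lin f ub = tens uc ud"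
  shows "inv_pair (tmult ma (tmult mc (tmult md me))) (tens ua (tens uc (tens ud ue)))
    (split_mid f X) (split_mid f X')"
proof -
  have "inv_pair (tmult ma (tmult (tmult mc md) me)) (tens ua (tens (tens uc ud) ue))
      (lin (tmap bas (tmap f bas)) X) (lin (tmap bas (tmap f bas)) X')"
    using assms by (intro inv_pair_map[OF assms(1)] multiplicative_tmap multiplicative_bas) simp_all
  then show ?thesis
    unfolding split_mid_def
    by (rule inv_pair_map[OF _ multiplicative_tmap[OF multiplicative_bas multiplicative_reas]]) simp
qed

lemma inv_pair_split_last:
  assumes "inv_pair (tmult ma (tmult mb mc)) (tens ua (tens ub uc)) X X'"
    and "multiplicative f mc (tmult md me)" "lin f uc = tens ud ue"
  shows "inv_pair (tmult ma (tmult mb (tmult md me))) (tens ua (tens ub (tens ud ue)))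
    (split_last f X) (split_last f X')"
  unfolding split_last_def using assms
  by (intro inv_pair_map[OF assms(1)] multiplicative_tmap multiplicative_bas) simp_all

lemma inv_pair_app1:
  assumes "inv_pair (tmult m1 (tmult m2 m3)) (tens u1 (tens u2 u3)) X X'" "bilin m4 e e = e"
  shows "inv_pair (tmult m1 (tmult m2 (tmult m3 m4))) (tens u1 (tens u2 (tens u3 e)))
    (lin (app1 e) X) (lin (app1 e) X')"
  using assms by (intro inv_pair_map[OF assms(1)] multiplicative_app1) simp_all

locale lr_smash =
  fixes mH :: "'h \<Rightarrow> 'h \<Rightarrow> ('h \<Rightarrow>\<^sub>0 'k::field)" and uH :: "'h \<Rightarrow>\<^sub>0 'k"
    and D :: "'h \<Rightarrow> ('h \<times> 'h \<Rightarrow>\<^sub>0 'k)" and e :: "'h \<Rightarrow> 'k"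
    and Phi Phii :: "'h \<times> 'h \<times> 'h \<Rightarrow>\<^sub>0 'k"
    and la :: "'h \<Rightarrow> 'a \<Rightarrow> ('a \<Rightarrow>\<^sub>0 'k)" and ra :: "'a \<Rightarrow> 'h \<Rightarrow> ('a \<Rightarrow>\<^sub>0 'k)"
    and mA :: "'a \<Rightarrow> 'a \<Rightarrow> ('a \<Rightarrow>\<^sub>0 'k)" and uA :: "'a \<Rightarrow>\<^sub>0 'k"
    and mU :: "'u \<Rightarrow> 'u \<Rightarrow> ('u \<Rightarrow>\<^sub>0 'k)" and uU :: "'u \<Rightarrow>\<^sub>0 'k"
    and lam :: "'u \<Rightarrow> ('h \<times> 'u \<Rightarrow>\<^sub>0 'k)" and rho :: "'u \<Rightarrow> ('u \<times> 'h \<Rightarrow>\<^sub>0 'k)"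
    and Pl Pli :: "'h \<times> 'h \<times> 'u \<Rightarrow>\<^sub>0 'k"
    and Pr Pri :: "'u \<times> 'h \<times> 'h \<Rightarrow>\<^sub>0 'k"
    and Plr Plri :: "'h \<times> 'u \<times> 'h \<Rightarrow>\<^sub>0 'k"
  assumes quasi_bialg: "quasi_bialgebra mH uH D e Phi Phii"
    and bimod_alg: "bimodule_algebra mH uH D e Phi Phii la ra mA uA"
    and bicomod_alg: "bicomodule_algebra mH uH D e Phi mU uU lam rho Pl Pli Pr Pri Plr Plri"
begin

lemma left_comod: "left_comodule_algebra mH uH D e Phi mU uU lam Pl Pli"
  using bicomod_alg unfolding bicomodule_algebra_def Let_def by blast

lemma right_comod: "right_comodule_algebra mH uH D e Phi mU uU rho Pr Pri"
  using bicomod_alg unfolding bicomodule_algebra_def Let_def by blast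

lemma assoc_H: "assoc_alg mH uH"
  using quasi_bialg unfolding quasi_bialgebra_def Let_def by blast

lemma assoc_U: "assoc_alg mU uU"
  using left_comod unfolding left_comodule_algebra_def Let_def by blast

lemma mH_assoc [simp]: "bilin mH (bilin mH x y) z = bilin mH x (bilin mH y z)"
  and mH_unit [simp]: "bilin mH uH x = x" "bilin mH x uH = x"
  using assoc_H unfolding assoc_alg_def by auto

lemma mU_assoc [simp]: "bilin mU (bilin mU x y) z = bilin mU x (bilin mU y z)"
  and mU_unit [simp]: "bilin mU uU x = x" "bilin mU x uU = x"
  using assoc_U unfolding assoc_alg_def by auto

lemma D_mult [simp]: "lin D (bilin mH x y) = bilin (tmult mH mH) (lin D x) (lin D y)"
  and D_unit [simp]: "lin D uH = tens uH uH"
  using quasi_bialg unfolding quasi_bialgebra_def Let_def alg_map_def by auto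

lemma lam_mult [simp]: "lin lam (bilin mU x y) = bilin (tmult mH mU) (lin lam x) (lin lam y)"
  and lam_unit [simp]: "lin lam uU = tens uH uU"
  using left_comod unfolding left_comodule_algebra_def Let_def alg_map_def by auto

lemma rho_mult [simp]: "lin rho (bilin mU x y) = bilin (tmult mU mH) (lin rho x) (lin rho y)"
  and rho_unit [simp]: "lin rho uU = tens uU uH"
  using right_comod unfolding right_comodule_algebra_def Let_def alg_map_def by auto

lemma eps_mult [simp]: "lfun e (bilin mH x y) = lfun e x * lfun e y"
  and eps_unit [simp]: "lfun e uH = 1"
  using quasi_bialg unfolding quasi_bialgebra_def Let_def by auto

lemma la_la [simp]: "bilin la g (bilin la h x) = bilin la (bilin mH g h) x"
  and la_unit [simp]: "bilin la uH x = x"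
  and ra_ra [simp]: "bilin ra (bilin ra x g) h = bilin ra x (bilin mH g h)"
  and ra_unit [simp]: "bilin ra x uH = x"
  and la_ra [simp]: "bilin la g (bilin ra x h) = bilin ra (bilin la g x) h"
  and mA_unit [simp]: "bilin mA uA x = x" "bilin mA x uA = x"
  and la_uA [simp]: "bilin la h uA = vsc (lfun e h) uA"
  and ra_uA [simp]: "bilin ra uA h = vsc (lfun e h) uA"
  using bimod_alg unfolding bimodule_algebra_def by auto

abbreviation "act h x k \<equiv> bilin ra (bilin la h x) k"

lemma la_mA [simp]: "bilin la h (bilin mA x y) = sw (lin D h) (\<lambda>a b. bilin mA (bilin la a x) (bilin la b y))"
  using bimod_alg unfolding bimodule_algebra_def by (simp add: sw_def)

lemma ra_mA [simp]: "bilin ra (bilin mA x y) h = sw (lin D h) (\<lambda>a b. bilin mA (bilin ra x a) (bilin ra y b))"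
  using bimod_alg unfolding bimodule_algebra_def by (simp add: sw_def)

lemma mA_quasi_assoc: "bilin mA (bilin mA x y) z =
   sw3 Phi (\<lambda>X1 X2 X3. sw3 Phii (\<lambda>x1 x2 x3. bilin mA (act X1 x x1) (bilin mA (act X2 y x2) (act X3 z x3))))"
  using bimod_alg unfolding bimodule_algebra_def by (simp add: sw_eq_lin bact_def case_prod_unfold)

end

section \<open>The L-R-smash product in Sweedler notation\<close>

text \<open>From now on basis tensors are not collapsed, so that the rules for \<open>sw\<close> on \<open>tens\<close> keep
  applying.\<close>

declare bilin_bas [simp del] tens_bas [simp del]

type_synonym ('h, 'u, 'k) kernel5 = "'h \<times> 'h \<times> 'u \<times> 'h \<times> 'h \<Rightarrow>\<^sub>0 'k"
type_synonym ('h, 'u, 'k) kernel7 = "'h \<times> 'h \<times> 'h \<times> 'u \<times> 'h \<times> 'h \<times> 'h \<Rightarrow>\<^sub>0 'k"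

context lr_smash
begin

abbreviation "tens5 x1 x2 x3 x4 x5 \<equiv> tens x1 (tens x2 (tens x3 (tens x4 x5)))"
abbreviation "tens7 x1 x2 x3 x4 x5 x6 x7 \<equiv> tens x1 (tens x2 (tens x3 (tens x4 (tens x5 (tens x6 x7)))))"
abbreviation "M5 \<equiv> tmult mH (tmult mH (tmult mU (tmult mH mH)))"
abbreviation "M7 \<equiv> tmult mH (tmult mH (tmult mH (tmult mU (tmult mH (tmult mH mH)))))"
abbreviation sw5 where "sw5 T F \<equiv> sw T (\<lambda>x1 y. sw4 y (\<lambda>x2 x3 x4 x5. F x1 x2 x3 x4 x5))"
abbreviation sw7 where
  "sw7 T F \<equiv> sw T (\<lambda>x1 y. sw y (\<lambda>x2 z. sw5 z (\<lambda>x3 x4 x5 x6 x7. F x1 x2 x3 x4 x5 x6 x7)))"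
abbreviation "SM \<equiv> smash_mult mH mU la ra mA lam rho Pli Plri Pri"
abbreviation "M_HHU \<equiv> tmult mH (tmult mH mU)"
abbreviation "M_UHH \<equiv> tmult mU (tmult mH mH)"
abbreviation "M_HUH \<equiv> tmult mH (tmult mU mH)"
abbreviation "M_HHHU \<equiv> tmult mH (tmult mH (tmult mH mU))"
abbreviation "M_UHHH \<equiv> tmult mU (tmult mH (tmult mH mH))"
abbreviation "M_HHUH \<equiv> tmult mH (tmult mH (tmult mU mH))"
abbreviation "M_HUHH \<equiv> tmult mH (tmult mU (tmult mH mH))"

definition smash_sw :: "('a \<Rightarrow>\<^sub>0 'k) \<Rightarrow> ('u \<Rightarrow>\<^sub>0 'k) \<Rightarrow> ('a \<Rightarrow>\<^sub>0 'k) \<Rightarrow> ('u \<Rightarrow>\<^sub>0 'k) \<Rightarrow> ('a \<times> 'u \<Rightarrow>\<^sub>0 'k)" where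
  "smash_sw x y x' y' = sw3 Pli (\<lambda>l1 l2 l3. sw3 Plri (\<lambda>t1 t2 t3. sw3 Pri (\<lambda>r1 r2 r3.
   sw (lin lam y) (\<lambda>p q. sw (lin rho y') (\<lambda>s w. tens (bilin mA (act l1 x (bilin mH t3 (bilin mH w r2)))
     (act (bilin mH l2 (bilin mH p t1)) x' r3)) (bilin mU l3 (bilin mU q (bilin mU t2 (bilin mU s r1)))))))))"

lemma SM_bas: "SM (f, u) (g, v) = smash_sw (bas f) (bas u) (bas g) (bas v)"
  unfolding smash_mult_def bact_def smash_sw_def by (simp add: sw_eq_lin case_prod_unfold)

lemma SM_tens: "bilin SM (tens x y) (tens x' y') = smash_sw x y x' y'"
proof (rule bilinear_eqI[where F = "\<lambda>x y. bilin SM (tens x y) (tens x' y')"])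
  fix i j
  show "bilin SM (tens (bas i) (bas j)) (tens x' y') = smash_sw (bas i) (bas j) x' y'"
  proof (rule bilinear_eqI[where F = "\<lambda>x' y'. bilin SM (tens (bas i) (bas j)) (tens x' y')"])
    show "bilin SM (tens (bas i) (bas j)) (tens (bas k) (bas l)) = smash_sw (bas i) (bas j) (bas k) (bas l)"
      for k l by (simp add: tens_bas bilin_bas SM_bas)
  qed (simp_all add: smash_sw_def)
qed (simp_all add: smash_sw_def)

text \<open>\<open>in5_ij\<dots> X\<close> puts the tensor factors of \<open>X\<close> into positions \<open>i, j, \<dots>\<close> of
  \<open>H \<otimes> H \<otimes> U \<otimes> H \<otimes> H\<close> and \<open>1\<close> everywhere else.\<close>

definition in5_123 :: "('h \<times> 'h \<times> 'u \<Rightarrow>\<^sub>0 'k) \<Rightarrow> ('h, 'u, 'k) kernel5" where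
  "in5_123 X = sw3 X (\<lambda>a b c. tens5 a b c uH uH)"
definition in5_23 :: "('h \<times> 'u \<Rightarrow>\<^sub>0 'k) \<Rightarrow> ('h, 'u, 'k) kernel5" where
  "in5_23 X = sw X (\<lambda>b c. tens5 uH b c uH uH)"
definition in5_234 :: "('h \<times> 'u \<times> 'h \<Rightarrow>\<^sub>0 'k) \<Rightarrow> ('h, 'u, 'k) kernel5" where
  "in5_234 X = sw3 X (\<lambda>b c d. tens5 uH b c d uH)"
definition in5_34 :: "('u \<times> 'h \<Rightarrow>\<^sub>0 'k) \<Rightarrow> ('h, 'u, 'k) kernel5" where
  "in5_34 X = sw X (\<lambda>c d. tens5 uH uH c d uH)"
definition in5_345 :: "('u \<times> 'h \<times> 'h \<Rightarrow>\<^sub>0 'k) \<Rightarrow> ('h, 'u, 'k) kernel5" where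
  "in5_345 X = sw3 X (\<lambda>c d x. tens5 uH uH c d x)"

definition act2 :: "('a \<Rightarrow>\<^sub>0 'k) \<Rightarrow> ('a \<Rightarrow>\<^sub>0 'k) \<Rightarrow> ('h, 'u, 'k) kernel5 \<Rightarrow> ('a \<times> 'u \<Rightarrow>\<^sub>0 'k)" where
  "act2 f g W = sw5 W (\<lambda>x1 x2 x3 x4 x5. tens (bilin mA (act x1 f x4) (act x2 g x5)) x3)"

definition smash_kernel :: "'u \<Rightarrow> 'u \<Rightarrow> ('h, 'u, 'k) kernel5" where
  "smash_kernel u v = bilin M5 (in5_123 Pli) (bilin M5 (in5_23 (lam u))
   (bilin M5 (in5_234 Plri) (bilin M5 (in5_34 (rho v)) (in5_345 Pri))))"

lemma SM_eq_act2: "SM (f, u) (g, v) = act2 (bas f) (bas g) (smash_kernel u v)"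
  unfolding SM_bas smash_sw_def act2_def smash_kernel_def in5_123_def in5_23_def in5_234_def in5_34_def in5_345_def
  apply simp
  apply (simp only: sw3_sw_swap[of Pli])
  apply (simp only: sw3_sw_swap[of Plri])
  apply (simp only: sw3_sw_swap[of Pri])
  apply (simp only: sw_swap[of "lam u"])
  done

text \<open>\<open>in7_ij\<dots> X\<close> and the lifts are the analogous embeddings into the algebra
  \<open>H \<otimes> H \<otimes> H \<otimes> U \<otimes> H \<otimes> H \<otimes> H\<close> in which the kernels of triple products live; \<open>lift_lam\<close>
  (\<open>lift_rho\<close>) applies \<open>\<lambda>\<close> (\<open>\<rho>\<close>) to the \<open>U\<close>-factor of an element of \<open>H \<otimes> H \<otimes> U \<otimes> H \<otimes> H\<close>.\<close>

definition in7_1234 :: "('h \<times> 'h \<times> 'h \<times> 'u \<Rightarrow>\<^sub>0 'k) \<Rightarrow> ('h, 'u, 'k) kernel7" where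
  "in7_1234 X = sw4 X (\<lambda>a b c d. tens7 a b c d uH uH uH)"
definition in7_234 :: "('h \<times> 'h \<times> 'u \<Rightarrow>\<^sub>0 'k) \<Rightarrow> ('h, 'u, 'k) kernel7" where
  "in7_234 X = sw3 X (\<lambda>b c d. tens7 uH b c d uH uH uH)"
definition in7_2345 :: "('h \<times> 'h \<times> 'u \<times> 'h \<Rightarrow>\<^sub>0 'k) \<Rightarrow> ('h, 'u, 'k) kernel7" where
  "in7_2345 X = sw4 X (\<lambda>b c d x. tens7 uH b c d x uH uH)"
definition in7_345 :: "('h \<times> 'u \<times> 'h \<Rightarrow>\<^sub>0 'k) \<Rightarrow> ('h, 'u, 'k) kernel7" where
  "in7_345 X = sw3 X (\<lambda>c d x. tens7 uH uH c d x uH uH)"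
definition in7_3456 :: "('h \<times> 'u \<times> 'h \<times> 'h \<Rightarrow>\<^sub>0 'k) \<Rightarrow> ('h, 'u, 'k) kernel7" where
  "in7_3456 X = sw4 X (\<lambda>c d x f. tens7 uH uH c d x f uH)"
definition in7_456 :: "('u \<times> 'h \<times> 'h \<Rightarrow>\<^sub>0 'k) \<Rightarrow> ('h, 'u, 'k) kernel7" where
  "in7_456 X = sw3 X (\<lambda>d x f. tens7 uH uH uH d x f uH)"
definition in7_4567 :: "('u \<times> 'h \<times> 'h \<times> 'h \<Rightarrow>\<^sub>0 'k) \<Rightarrow> ('h, 'u, 'k) kernel7" where
  "in7_4567 X = sw4 X (\<lambda>d x f g. tens7 uH uH uH d x f g)"

definition lift_lam :: "('h, 'u, 'k) kernel5 \<Rightarrow> ('h, 'u, 'k) kernel7" where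
  "lift_lam Y = sw5 Y (\<lambda>x1 x2 x3 x4 x5. sw (lin lam x3) (\<lambda>p q. tens7 x1 x2 p q x4 x5 uH))"
definition lift_rho :: "('h, 'u, 'k) kernel5 \<Rightarrow> ('h, 'u, 'k) kernel7" where
  "lift_rho Y = sw5 Y (\<lambda>x1 x2 x3 x4 x5. sw (lin rho x3) (\<lambda>p q. tens7 uH x1 x2 p q x4 x5))"

definition act3 :: "('a \<Rightarrow>\<^sub>0 'k) \<Rightarrow> ('a \<Rightarrow>\<^sub>0 'k) \<Rightarrow> ('a \<Rightarrow>\<^sub>0 'k) \<Rightarrow> ('h, 'u, 'k) kernel7 \<Rightarrow> ('a \<times> 'u \<Rightarrow>\<^sub>0 'k)" where
  "act3 f g h W = sw7 W (\<lambda>x1 x2 x3 x4 x5 x6 x7.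
   tens (bilin mA (act x1 f x5) (bilin mA (act x2 g x6) (act x3 h x7))) x4)"

definition kernel_right :: "('h, 'u, 'k) kernel5 \<Rightarrow> 'u \<Rightarrow> ('h, 'u, 'k) kernel7" where
  "kernel_right W w = bilin M7 (in7_1234 (lin (app1 uU) Phi)) (bilin M7 (in7_1234 (split_first D Pli))
   (bilin M7 (lift_lam W) (bilin M7 (in7_3456 (split_last D Plri)) (bilin M7 (in7_456 (split_snd D (rho w)))
   (bilin M7 (in7_4567 (split_mid D Pri)) (in7_4567 (tens uU Phii)))))))"

definition kernel_left :: "'u \<Rightarrow> ('h, 'u, 'k) kernel5 \<Rightarrow> ('h, 'u, 'k) kernel7" where
  "kernel_left u W = bilin M7 (in7_1234 (split_mid D Pli)) (bilin M7 (in7_234 (split_first D (lam u)))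
   (bilin M7 (in7_2345 (split_first D Plri)) (bilin M7 (lift_rho W) (in7_4567 (split_last D Pri)))))"

text \<open>Multiplying an \<open>act2\<close>-term by a basis vector: expand both sides into Sweedler sums (the
  bimodule-algebra axioms produce sums over \<open>\<Delta>\<close>, the quasi-associativity of \<open>\<A>\<close> produces
  \<open>\<Phi>\<close> and \<open>\<Phi>\<^sup>-\<^sup>1\<close>), absorb the \<open>\<Delta>\<close>-sums into the \<open>split\<close> terms, and permute the
  remaining sums into the order of the factors of the kernel.\<close>

lemma act2_mult_right_bas:
  "bilin SM (act2 f g (bas (a, b, c, d, x))) (bas (h, w))
    = act3 f g (bas h) (kernel_right (bas (a, b, c, d, x)) w)"
  apply (simp add: act2_def SM_tens flip: tens_bas)
  apply (simp add: smash_sw_def act3_def kernel_right_def in7_1234_def in7_234_def in7_2345_def in7_345_def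
      in7_3456_def in7_456_def in7_4567_def lift_lam_def mA_quasi_assoc)
  apply (simp add: sw3_sw_swap[of Pli "lin D _"] sw3_sw_swap[of Plri "lin D _"] sw3_sw_swap[of Pri "lin D _"]
      sw_swap[of "lam c" "lin D _"] sw_swap[of "rho w" "lin D _"]
      sw4_sw_swap[of "split_first D Pli" "lin D _"] sw4_sw_swap[of "split_last D Plri" "lin D _"]
      sw4_sw_swap[of "split_mid D Pri" "lin D _"] sw3_sw_swap[of "split_snd D (rho w)" "lin D _"]
      sw4_split_first[symmetric, where X = Pli] sw4_split_mid[symmetric, where X = Pri]
      sw4_split_last[symmetric, where X = Plri] sw3_split_snd[symmetric, where X = "rho w"])
  apply (simp only: sw4_sw_swap[of "split_first D Pli"])
  apply (simp only: sw4_sw_swap[of "split_last D Plri"])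
  apply (simp only: sw4_sw_swap[of "split_mid D Pri"])
  apply (simp only: sw_swap[of "lam c"])
  apply (simp only: sw3_sw_swap[of "split_snd D (rho w)"])
  apply (simp only: sw3_sw_swap[of "Phi"])
  done

lemma act2_mult_left_bas:
  "bilin SM (bas (f, u)) (act2 g h (bas (a, b, c, d, x)))
    = act3 (bas f) g h (kernel_left u (bas (a, b, c, d, x)))"
  apply (simp add: act2_def SM_tens flip: tens_bas)
  apply (simp add: smash_sw_def act3_def kernel_left_def in7_1234_def in7_234_def in7_2345_def in7_345_def
      in7_3456_def in7_456_def in7_4567_def lift_rho_def)
  apply (simp add: sw3_sw_swap[of Pli "lin D _"] sw3_sw_swap[of Plri "lin D _"] sw3_sw_swap[of Pri "lin D _"]
      sw_swap[of "lam u" "lin D _"] sw_swap[of "rho c" "lin D _"]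
      sw4_sw_swap[of "split_mid D Pli" "lin D _"] sw4_sw_swap[of "split_first D Plri" "lin D _"]
      sw4_sw_swap[of "split_last D Pri" "lin D _"] sw3_sw_swap[of "split_first D (lam u)" "lin D _"]
      sw4_split_mid[symmetric, where X = Pli] sw4_split_first[symmetric, where X = Plri]
      sw4_split_last[symmetric, where X = Pri] sw3_split_first[symmetric, where X = "lam u"])
  apply (simp only: sw4_sw_swap[of "split_mid D Pli"])
  apply (simp only: sw4_sw_swap[of "split_first D Plri"])
  apply (simp only: sw4_sw_swap[of "split_last D Pri"])
  apply (simp only: sw3_sw_swap[of "split_first D (lam u)"])
  done

section \<open>Associativity\<close>

lemma in7_1234_mult: "\<And>X Y. in7_1234 (bilin M_HHHU X Y) = bilin M7 (in7_1234 X) (in7_1234 Y)"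
  and in7_234_mult: "\<And>X Y. in7_234 (bilin M_HHU X Y) = bilin M7 (in7_234 X) (in7_234 Y)"
  and in7_2345_mult: "\<And>X Y. in7_2345 (bilin M_HHUH X Y) = bilin M7 (in7_2345 X) (in7_2345 Y)"
  and in7_345_mult: "\<And>X Y. in7_345 (bilin M_HUH X Y) = bilin M7 (in7_345 X) (in7_345 Y)"
  and in7_3456_mult: "\<And>X Y. in7_3456 (bilin M_HUHH X Y) = bilin M7 (in7_3456 X) (in7_3456 Y)"
  and in7_456_mult: "\<And>X Y. in7_456 (bilin M_UHH X Y) = bilin M7 (in7_456 X) (in7_456 Y)"
  and in7_4567_mult: "\<And>X Y. in7_4567 (bilin M_UHHH X Y) = bilin M7 (in7_4567 X) (in7_4567 Y)"
  by (rule bilinear_eqI[where F = "\<lambda>X Y. _ (bilin _ X Y)"];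
      simp add: in7_1234_def in7_234_def in7_2345_def in7_345_def in7_3456_def in7_456_def
        in7_4567_def split_paired_all flip: tens_bas)+

lemma lift_lam_mult: "lift_lam (bilin M5 X Y) = bilin M7 (lift_lam X) (lift_lam Y)"
  by (rule bilinear_eqI[where F = "\<lambda>X Y. lift_lam (bilin M5 X Y)"])
     (simp_all add: lift_lam_def split_paired_all flip: tens_bas, subst sw_swap, rule refl)

lemma lift_rho_mult: "lift_rho (bilin M5 X Y) = bilin M7 (lift_rho X) (lift_rho Y)"
  by (rule bilinear_eqI[where F = "\<lambda>X Y. lift_rho (bilin M5 X Y)"])
     (simp_all add: lift_rho_def split_paired_all flip: tens_bas, subst sw_swap, rule refl)

lemma in7_1234_tens: "\<And>X. in7_1234 (tens uH X) = in7_234 X"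
  and in7_2345_app1: "\<And>X. in7_2345 (lin (app1 uH) X) = in7_234 X"
  and in7_2345_tens: "\<And>X. in7_2345 (tens uH X) = in7_345 X"
  and in7_3456_app1: "\<And>X. in7_3456 (lin (app1 uH) X) = in7_345 X"
  and in7_3456_tens: "\<And>X. in7_3456 (tens uH X) = in7_456 X"
  and in7_4567_app1: "\<And>X. in7_4567 (lin (app1 uH) X) = in7_456 X"
  by (simp_all add: in7_1234_def in7_234_def in7_2345_def in7_345_def in7_3456_def in7_456_def in7_4567_def)

lemma lift_lam_in5:
  "lift_lam (in5_123 X) = in7_1234 (split_last lam X)"
  "lift_lam (in5_23 Y) = in7_234 (split_snd lam Y)"
  "lift_lam (in5_234 Z) = in7_2345 (split_mid lam Z)"
  "lift_lam (in5_34 Y') = in7_345 (split_first lam Y')"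
  "lift_lam (in5_345 Z') = in7_3456 (split_first lam Z')"
  by (simp_all add: lift_lam_def in5_123_def in5_23_def in5_234_def in5_34_def in5_345_def
      in7_1234_def in7_234_def in7_2345_def in7_345_def in7_3456_def
      split_last_def split_snd_def split_mid_def split_first_def sw_swap[of "lin lam _"])

lemma lift_rho_in5:
  "lift_rho (in5_123 X) = in7_2345 (split_last rho X)"
  "lift_rho (in5_23 Y) = in7_345 (split_snd rho Y)"
  "lift_rho (in5_234 Z) = in7_3456 (split_mid rho Z)"
  "lift_rho (in5_34 Y') = in7_456 (split_first rho Y')"
  "lift_rho (in5_345 Z') = in7_4567 (split_first rho Z')"
  by (simp_all add: lift_rho_def in5_123_def in5_23_def in5_234_def in5_34_def in5_345_def
      in7_2345_def in7_345_def in7_3456_def in7_456_def in7_4567_def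
      split_last_def split_snd_def split_mid_def split_first_def sw_swap[of "lin rho _"])

lemma multiplicative_D: "multiplicative D mH (tmult mH mH)"
  and multiplicative_lam: "multiplicative lam mU (tmult mH mU)"
  and multiplicative_rho: "multiplicative rho mU (tmult mU mH)"
  by (simp_all add: multiplicative_def)

lemma assoc_HU: "assoc_alg (tmult mH mU) (tens uH uU)"
  and assoc_UH: "assoc_alg (tmult mU mH) (tens uU uH)"
  and assoc_HHU: "assoc_alg M_HHU (tens uH (tens uH uU))"
  and assoc_UHH: "assoc_alg M_UHH (tens uU (tens uH uH))"
  and assoc_HUH: "assoc_alg M_HUH (tens uH (tens uU uH))"
  and assoc_HHHU: "assoc_alg M_HHHU (tens uH (tens uH (tens uH uU)))"
  and assoc_UHHH: "assoc_alg M_UHHH (tens uU (tens uH (tens uH uH)))"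
  and assoc_HHUH: "assoc_alg M_HHUH (tens uH (tens uH (tens uU uH)))"
  and assoc_HUHH: "assoc_alg M_HUHH (tens uH (tens uU (tens uH uH)))"
  and assoc_M7: "assoc_alg M7 (tens7 uH uH uH uU uH uH uH)"
  by (intro assoc_alg_tmult assoc_H assoc_U)+

lemma inv_Phi: "inv_pair (tmult mH (tmult mH mH)) (tens uH (tens uH uH)) Phi Phii"
  using quasi_bialg unfolding quasi_bialgebra_def Let_def by blast

lemma inv_Pl: "inv_pair M_HHU (tens uH (tens uH uU)) Pl Pli"
  and lam_coassoc: "bilin M_HHU (split_snd lam (lin lam x)) Pl
    = bilin M_HHU Pl (split_first D (lin lam x))"
  and lam_pentagon: "bilin M_HHHU (bilin M_HHHU (tens uH Pl) (split_mid D Pl)) (lin (app1 uU) Phi)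
    = bilin M_HHHU (split_last lam Pl) (split_first D Pl)"
  using left_comod unfolding left_comodule_algebra_def Let_def split_snd_def split_first_def
    split_mid_def split_last_def by blast+

lemma inv_Pr: "inv_pair M_UHH (tens uU (tens uH uH)) Pr Pri"
  and rho_coassoc: "bilin M_UHH Pr (split_first rho (lin rho x))
    = bilin M_UHH (split_snd D (lin rho x)) Pr"
  and rho_pentagon: "bilin M_UHHH (bilin M_UHHH (tens uU Phi) (split_mid D Pr)) (lin (app1 uH) Pr)
    = bilin M_UHHH (split_last D Pr) (split_first rho Pr)"
  using right_comod unfolding right_comodule_algebra_def Let_def split_snd_def split_first_def
    split_mid_def split_last_def by blast+

lemma inv_Plr: "inv_pair M_HUH (tens uH (tens uU uH)) Plr Plri"
  and lam_rho_compat: "bilin M_HUH Plr (split_first lam (lin rho x))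
    = bilin M_HUH (split_snd rho (lin lam x)) Plr"
  and lr_pentagon_lam: "bilin M_HHUH (bilin M_HHUH (tens uH Plr) (split_mid lam Plr)) (lin (app1 uH) Pl)
    = bilin M_HHUH (split_last rho Pl) (split_first D Plr)"
  and lr_pentagon_rho: "bilin M_HUHH (bilin M_HUHH (tens uH Pr) (split_mid rho Plr)) (lin (app1 uH) Plr)
    = bilin M_HUHH (split_last D Plr) (split_first lam Pr)"
  using bicomod_alg unfolding bicomodule_algebra_def Let_def split_snd_def split_first_def
    split_mid_def split_last_def by blast+

lemma lam_pentagon_inv:
  "bilin M_HHHU (lin (app1 uU) Phi) (bilin M_HHHU (split_first D Pli) (split_last lam Pli))
    = bilin M_HHHU (split_mid D Pli) (tens uH Pli)"
  by (rule inv_pair_solve_left[OF assoc_HHHU inv_pair_app1[OF inv_Phi mU_unit(1)]],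
      rule inv_pair_invert_eq[OF assoc_HHHU inv_pair_tens_left[OF inv_Pl mH_unit(1)]
        inv_pair_split_mid[OF inv_Pl multiplicative_D D_unit] inv_pair_app1[OF inv_Phi mU_unit(1)]
        inv_pair_split_last[OF inv_Pl multiplicative_lam lam_unit]
        inv_pair_split_first[OF inv_Pl multiplicative_D D_unit] lam_pentagon])

lemma rho_pentagon_inv:
  "bilin M_UHHH (lin (app1 uH) Pri) (bilin M_UHHH (split_mid D Pri) (tens uU Phii))
    = bilin M_UHHH (split_first rho Pri) (split_last D Pri)"
  using inv_pair_invert_eq[OF assoc_UHHH inv_pair_tens_left[OF inv_Phi mU_unit(1)]
      inv_pair_split_mid[OF inv_Pr multiplicative_D D_unit] inv_pair_app1[OF inv_Pr mH_unit(1)]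
      inv_pair_split_last[OF inv_Pr multiplicative_D D_unit]
      inv_pair_split_first[OF inv_Pr multiplicative_rho rho_unit] rho_pentagon]
  by (simp add: assoc_algD[OF assoc_UHHH])

lemma lr_pentagon_lam_inv:
  "bilin M_HHUH (lin (app1 uH) Pli) (bilin M_HHUH (split_mid lam Plri) (tens uH Plri))
    = bilin M_HHUH (split_first D Plri) (split_last rho Pli)"
  using inv_pair_invert_eq[OF assoc_HHUH inv_pair_tens_left[OF inv_Plr mH_unit(1)]
      inv_pair_split_mid[OF inv_Plr multiplicative_lam lam_unit] inv_pair_app1[OF inv_Pl mH_unit(1)]
      inv_pair_split_last[OF inv_Pl multiplicative_rho rho_unit]
      inv_pair_split_first[OF inv_Plr multiplicative_D D_unit] lr_pentagon_lam]
  by (simp add: assoc_algD[OF assoc_HHUH])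

lemma lr_pentagon_rho_inv:
  "bilin M_HUHH (lin (app1 uH) Plri) (bilin M_HUHH (split_mid rho Plri) (tens uH Pri))
    = bilin M_HUHH (split_first lam Pri) (split_last D Plri)"
  using inv_pair_invert_eq[OF assoc_HUHH inv_pair_tens_left[OF inv_Pr mH_unit(1)]
      inv_pair_split_mid[OF inv_Plr multiplicative_rho rho_unit] inv_pair_app1[OF inv_Plr mH_unit(1)]
      inv_pair_split_last[OF inv_Plr multiplicative_D D_unit]
      inv_pair_split_first[OF inv_Pr multiplicative_lam lam_unit] lr_pentagon_rho]
  by (simp add: assoc_algD[OF assoc_HUHH])

lemma lam_coassoc_inv: "bilin M_HHU Pli (split_snd lam (lam u)) = bilin M_HHU (split_first D (lam u)) Pli"
  using inv_pair_conj_left[OF assoc_HHU inv_Pl lam_coassoc[of "bas u"]] by simp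

lemma rho_coassoc_inv: "bilin M_UHH (split_first rho (rho w)) Pri = bilin M_UHH Pri (split_snd D (rho w))"
  using inv_pair_conj_right[OF assoc_UHH inv_Pr rho_coassoc[of "bas w"]] by simp

lemma lam_rho_compat_inv: "bilin M_HUH Plri (split_snd rho (lam v)) = bilin M_HUH (split_first lam (rho v)) Plri"
  using inv_pair_conj_right[OF assoc_HUH inv_Plr lam_rho_compat[of "bas v"]] by simp

lemma lam_pentagon_in7:
  "bilin M7 (in7_1234 (lin (app1 uU) Phi)) (bilin M7 (in7_1234 (split_first D Pli))
      (bilin M7 (in7_1234 (split_last lam Pli)) Z))
    = bilin M7 (in7_1234 (split_mid D Pli)) (bilin M7 (in7_234 Pli) Z)"
  by (rule mult_eq_extend3[OF assoc_M7]) (metis lam_pentagon_inv in7_1234_mult in7_1234_tens)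

lemma lam_coassoc_in7:
  "bilin M7 (in7_234 Pli) (bilin M7 (in7_234 (split_snd lam (lam u))) Z)
    = bilin M7 (in7_234 (split_first D (lam u))) (bilin M7 (in7_234 Pli) Z)"
  by (rule mult_eq_extend2[OF assoc_M7]) (metis lam_coassoc_inv in7_234_mult)

lemma rho_coassoc_in7:
  "bilin M7 (in7_456 (split_first rho (rho w))) (bilin M7 (in7_456 Pri) Z)
    = bilin M7 (in7_456 Pri) (bilin M7 (in7_456 (split_snd D (rho w))) Z)"
  by (rule mult_eq_extend2[OF assoc_M7]) (metis rho_coassoc_inv in7_456_mult)

lemma rho_pentagon_in7:
  "bilin M7 (in7_4567 (split_first rho Pri)) (in7_4567 (split_last D Pri))
    = bilin M7 (in7_456 Pri) (bilin M7 (in7_4567 (split_mid D Pri)) (in7_4567 (tens uU Phii)))"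
  by (metis rho_pentagon_inv in7_4567_mult in7_4567_app1)

lemma lr_pentagon_lam_in7:
  "bilin M7 (in7_234 Pli) (bilin M7 (in7_2345 (split_mid lam Plri)) (bilin M7 (in7_345 Plri) Z))
    = bilin M7 (in7_2345 (split_first D Plri)) (bilin M7 (in7_2345 (split_last rho Pli)) Z)"
  by (rule mult_eq_extend3[OF assoc_M7]) (metis lr_pentagon_lam_inv in7_2345_mult in7_2345_app1 in7_2345_tens)

lemma lr_pentagon_rho_in7:
  "bilin M7 (in7_345 Plri) (bilin M7 (in7_3456 (split_mid rho Plri)) (bilin M7 (in7_456 Pri) Z))
    = bilin M7 (in7_3456 (split_first lam Pri)) (bilin M7 (in7_3456 (split_last D Plri)) Z)"
  by (rule mult_eq_extend3[OF assoc_M7]) (metis lr_pentagon_rho_inv in7_3456_mult in7_3456_app1 in7_3456_tens)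

lemma lam_rho_compat_in7:
  "bilin M7 (in7_345 Plri) (bilin M7 (in7_345 (split_snd rho (lam v))) Z)
    = bilin M7 (in7_345 (split_first lam (rho v))) (bilin M7 (in7_345 Plri) Z)"
  by (rule mult_eq_extend2[OF assoc_M7]) (metis lam_rho_compat_inv in7_345_mult)

text \<open>After lifting both kernels to \<open>H \<otimes> H \<otimes> H \<otimes> U \<otimes> H \<otimes> H \<otimes> H\<close> and reassociating, the
  seven identities above rewrite the left-hand kernel into the right-hand one.\<close>

lemma kernel_assoc: "kernel_right (smash_kernel u v) w = kernel_left u (smash_kernel v w)"
  unfolding kernel_right_def kernel_left_def smash_kernel_def
  by (simp only: lift_lam_mult lift_rho_mult lift_lam_in5 lift_rho_in5 assoc_algD(1)[OF assoc_M7]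
      lam_pentagon_in7 lam_coassoc_in7 rho_pentagon_in7 rho_coassoc_in7 lr_pentagon_lam_in7[symmetric]
      lam_rho_compat_in7 lr_pentagon_rho_in7)

lemma act2_mult_right: "bilin SM (act2 f g W) (bas (h, w)) = act3 f g (bas h) (kernel_right W w)"
  by (rule lin_map_eqI[where F = "\<lambda>W. bilin SM (act2 f g W) (bas (h, w))"])
     (simp add: act2_def, simp add: act3_def kernel_right_def lift_lam_def,
      simp only: split_paired_all act2_mult_right_bas)

lemma act2_mult_left: "bilin SM (bas (f, u)) (act2 g h W) = act3 (bas f) g h (kernel_left u W)"
  by (rule lin_map_eqI[where F = "\<lambda>W. bilin SM (bas (f, u)) (act2 g h W)"])
     (simp add: act2_def, simp add: act3_def kernel_left_def lift_rho_def,
      simp only: split_paired_all act2_mult_left_bas)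

lemma SM_assoc_bas: "bilin SM (bilin SM (bas i) (bas j)) (bas k) = bilin SM (bas i) (bilin SM (bas j) (bas k))"
proof -
  obtain f u g v h w where ijk: "i = (f, u)" "j = (g, v)" "k = (h, w)"
    by fastforce
  have "bilin SM (bilin SM (bas (f, u)) (bas (g, v))) (bas (h, w))
      = bilin SM (act2 (bas f) (bas g) (smash_kernel u v)) (bas (h, w))"
    by (simp add: bilin_bas SM_eq_act2)
  also have "\<dots> = act3 (bas f) (bas g) (bas h) (kernel_right (smash_kernel u v) w)"
    by (rule act2_mult_right)
  also have "\<dots> = act3 (bas f) (bas g) (bas h) (kernel_left u (smash_kernel v w))"
    by (simp only: kernel_assoc)
  also have "\<dots> = bilin SM (bas (f, u)) (act2 (bas g) (bas h) (smash_kernel v w))"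
    by (rule act2_mult_left[symmetric])
  also have "\<dots> = bilin SM (bas (f, u)) (bilin SM (bas (g, v)) (bas (h, w)))"
    by (simp add: bilin_bas SM_eq_act2)
  finally show ?thesis
    using ijk by simp
qed

lemma SM_assoc: "bilin SM (bilin SM x y) z = bilin SM x (bilin SM y z)"
  by (rule trilinear_eqI[where F = "\<lambda>x y z. bilin SM (bilin SM x y) z"]) (simp_all add: SM_assoc_bas)

end

section \<open>The unit\<close>

lemma lfun_eq_sum_superset:
  assumes "finite S" "Poly_Mapping.keys x \<subseteq> S"
  shows "lfun e x = (\<Sum>i\<in>S. Poly_Mapping.lookup x i * e i)"
  unfolding lfun_def using assms by (intro sum.mono_neutral_left) (auto simp: in_keys_iff)

lemma lfun_add [simp]: "lfun e (x + y) = lfun e x + lfun e y"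
proof -
  let ?S = "Poly_Mapping.keys x \<union> Poly_Mapping.keys y"
  have "lfun e (x + y) = (\<Sum>i\<in>?S. Poly_Mapping.lookup (x + y) i * e i)"
    using Poly_Mapping.keys_add[of x y] by (intro lfun_eq_sum_superset) auto
  also have "\<dots> = lfun e x + lfun e y"
    by (subst (1 2) lfun_eq_sum_superset[where S = ?S]) (auto simp: lookup_add distrib_right sum.distrib)
  finally show ?thesis .
qed

lemma lfun_vsc [simp]: "lfun e (vsc c x) = c * lfun e x"
proof -
  have "lfun e (vsc c x) = (\<Sum>i\<in>Poly_Mapping.keys x. Poly_Mapping.lookup (vsc c x) i * e i)"
    by (intro lfun_eq_sum_superset) (auto simp: in_keys_iff)
  then show ?thesis
    by (simp add: lfun_def sum_distrib_left mult.assoc)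
qed

lemma lfun_bas [simp]: "lfun e (bas i) = e i"
  by (simp add: lfun_def bas_def)

lemma lin_map_vsc_lfun [simp]: "lin_map g \<Longrightarrow> lin_map (\<lambda>x. vsc (lfun e (g x)) y)"
  unfolding lin_map_def by (simp add: lin_map_add[of g] lin_map_vsc[of g] vsc_add_left)

text \<open>Nested scalar multiples are no longer merged, so that each counit factor
  \<open>vsc (lfun e a)\<close> stays next to the Sweedler sum it contracts.\<close>

declare vsc_vsc [simp del] sw_fun_vsc [simp]

context lr_smash
begin

definition eps_fst :: "('h \<times> 'b \<Rightarrow>\<^sub>0 'k) \<Rightarrow> ('b \<Rightarrow>\<^sub>0 'k)" where
  "eps_fst T = sw T (\<lambda>a y. vsc (lfun e a) y)"
definition eps_snd :: "('b \<times> 'h \<Rightarrow>\<^sub>0 'k) \<Rightarrow> ('b \<Rightarrow>\<^sub>0 'k)" where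
  "eps_snd T = sw T (\<lambda>x a. vsc (lfun e a) x)"
definition eps_mid :: "('b \<times> 'h \<times> 'c \<Rightarrow>\<^sub>0 'k) \<Rightarrow> ('b \<times> 'c \<Rightarrow>\<^sub>0 'k)" where
  "eps_mid T = sw T (\<lambda>x y. sw y (\<lambda>a z. vsc (lfun e a) (tens x z)))"
definition eps_last :: "('b \<times> 'c \<times> 'h \<Rightarrow>\<^sub>0 'k) \<Rightarrow> ('b \<times> 'c \<Rightarrow>\<^sub>0 'k)" where
  "eps_last T = sw T (\<lambda>x y. tens x (eps_snd y))"
definition eps_last4 :: "('b \<times> 'c \<times> 'd \<times> 'h \<Rightarrow>\<^sub>0 'k) \<Rightarrow> ('b \<times> 'c \<times> 'd \<Rightarrow>\<^sub>0 'k)" where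
  "eps_last4 T = sw T (\<lambda>x y. tens x (eps_last y))"

lemma eps_fst_tens [simp]: "eps_fst (tens x y) = vsc (lfun e x) y"
  by (simp add: eps_fst_def)

lemma eps_snd_tens [simp]: "eps_snd (tens x y) = vsc (lfun e y) x"
  by (simp add: eps_snd_def)

lemma eps_mid_tens [simp]: "eps_mid (tens x (tens y z)) = vsc (lfun e y) (tens x z)"
  by (simp add: eps_mid_def)

lemma eps_last_tens [simp]: "eps_last (tens x (tens y z)) = vsc (lfun e z) (tens x y)"
  by (simp add: eps_last_def eps_snd_def)

lemma eps_last4_tens [simp]: "eps_last4 (tens x (tens y (tens z t))) = vsc (lfun e t) (tens x (tens y z))"
  by (simp add: eps_last4_def eps_last_def eps_snd_def)

lemma lin_map_eps_fst [simp]: "lin_map g \<Longrightarrow> lin_map (\<lambda>x. eps_fst (g x))"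
  unfolding eps_fst_def by simp

lemma lin_map_eps_snd [simp]: "lin_map g \<Longrightarrow> lin_map (\<lambda>x. eps_snd (g x))"
  unfolding eps_snd_def by simp

lemma lin_map_eps_mid [simp]: "lin_map g \<Longrightarrow> lin_map (\<lambda>x. eps_mid (g x))"
  unfolding eps_mid_def by simp

lemma lin_map_eps_last [simp]: "lin_map g \<Longrightarrow> lin_map (\<lambda>x. eps_last (g x))"
  unfolding eps_last_def by simp

lemma lin_map_eps_last4 [simp]: "lin_map g \<Longrightarrow> lin_map (\<lambda>x. eps_last4 (g x))"
  unfolding eps_last4_def by simp

lemma lin_epsFirst: "lin (epsFirst e) X = eps_fst X"
  by (rule lin_map_eqI) (simp_all add: split_paired_all epsFirst_def eps_fst_def flip: tens_bas)

lemma lin_epsL: "lin (epsL e) X = eps_fst X"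
  by (rule lin_map_eqI) (simp_all add: split_paired_all epsL_def eps_fst_def flip: tens_bas)

lemma lin_epsR: "lin (epsR e) X = eps_snd X"
  by (rule lin_map_eqI) (simp_all add: split_paired_all epsR_def eps_snd_def flip: tens_bas)

lemma lin_epsMid: "lin (epsMid e) X = eps_mid X"
  by (rule lin_map_eqI) (simp_all add: split_paired_all epsMid_def flip: tens_bas)

lemma lin_epsLast: "lin (epsLast e) X = eps_last X"
  by (rule lin_map_eqI) (simp_all add: split_paired_all epsLast_def flip: tens_bas)

lemma eps_fst_Pl: "eps_fst Pl = tens uH uU"
  and eps_mid_Pl: "eps_mid Pl = tens uH uU"
  and eps_fst_lam [simp]: "eps_fst (lin lam x) = x"
  using left_comod unfolding left_comodule_algebra_def Let_def lin_epsFirst lin_epsMid lin_epsL by auto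

lemma eps_mid_Pr: "eps_mid Pr = tens uU uH"
  and eps_last_Pr: "eps_last Pr = tens uU uH"
  and eps_snd_rho [simp]: "eps_snd (lin rho x) = x"
  using right_comod unfolding right_comodule_algebra_def Let_def lin_epsMid lin_epsLast lin_epsR by auto

lemma eps_fst_D [simp]: "eps_fst (lin D x) = x"
  and eps_snd_D [simp]: "eps_snd (lin D x) = x"
  using quasi_bialg unfolding quasi_bialgebra_def Let_def lin_epsL lin_epsR by auto

lemma eps_fst_lam_bas [simp]: "eps_fst (lam u) = bas u"
  and eps_snd_rho_bas [simp]: "eps_snd (rho u) = bas u"
  and eps_fst_D_bas [simp]: "eps_fst (D h) = bas h"
  and eps_snd_D_bas [simp]: "eps_snd (D h) = bas h"
  using eps_fst_lam[of "bas u"] eps_snd_rho[of "bas u"] eps_fst_D[of "bas h"] eps_snd_D[of "bas h"] by simp_all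

lemma eps_fst_mult: "eps_fst (bilin (tmult mH M) X Y) = bilin M (eps_fst X) (eps_fst Y)"
  by (rule bilinear_eqI[where F = "\<lambda>X Y. eps_fst (bilin (tmult mH M) X Y)"])
     (simp_all add: split_paired_all vsc_vsc mult_ac flip: tens_bas)

lemma eps_mid_mult: "eps_mid (bilin (tmult m1 (tmult mH m3)) X Y) = bilin (tmult m1 m3) (eps_mid X) (eps_mid Y)"
  by (rule bilinear_eqI[where F = "\<lambda>X Y. eps_mid (bilin (tmult m1 (tmult mH m3)) X Y)"])
     (simp_all add: split_paired_all vsc_vsc mult_ac flip: tens_bas)

lemma eps_last_mult: "eps_last (bilin (tmult m1 (tmult m2 mH)) X Y) = bilin (tmult m1 m2) (eps_last X) (eps_last Y)"
  by (rule bilinear_eqI[where F = "\<lambda>X Y. eps_last (bilin (tmult m1 (tmult m2 mH)) X Y)"])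
     (simp_all add: split_paired_all vsc_vsc mult_ac flip: tens_bas)

lemma eps_last4_mult:
  "eps_last4 (bilin (tmult m1 (tmult m2 (tmult m3 mH))) X Y) = bilin (tmult m1 (tmult m2 m3)) (eps_last4 X) (eps_last4 Y)"
  by (rule bilinear_eqI[where F = "\<lambda>X Y. eps_last4 (bilin (tmult m1 (tmult m2 (tmult m3 mH))) X Y)"])
     (simp_all add: split_paired_all vsc_vsc mult_ac flip: tens_bas)

lemma eps_fst_Pli: "eps_fst Pli = tens uH uU"
  by (rule hom_inv_pair_unit[where \<phi> = eps_fst, OF assoc_HU eps_fst_mult inv_Pl]) (simp_all add: eps_fst_Pl)

lemma eps_mid_Pli: "eps_mid Pli = tens uH uU"
  by (rule hom_inv_pair_unit[where \<phi> = eps_mid, OF assoc_HU eps_mid_mult inv_Pl]) (simp_all add: eps_mid_Pl)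

lemma eps_mid_Pri: "eps_mid Pri = tens uU uH"
  by (rule hom_inv_pair_unit[where \<phi> = eps_mid, OF assoc_UH eps_mid_mult inv_Pr]) (simp_all add: eps_mid_Pr)

lemma eps_last_Pri: "eps_last Pri = tens uU uH"
  by (rule hom_inv_pair_unit[where \<phi> = eps_last, OF assoc_UH eps_last_mult inv_Pr]) (simp_all add: eps_last_Pr)

lemma lin_reas_tens_left: "lin reas (tens T z) = sw T (\<lambda>x y. tens x (tens y z))"
  by (rule lin_map_eqI[where F = "\<lambda>T. lin reas (tens T z)"]) (simp_all add: split_paired_all flip: tens_bas)

lemma eps_fst_sw: "eps_fst (sw T F) = sw T (\<lambda>a b. eps_fst (F a b))"
  by (rule lin_map_sw_distrib) (simp add: lin_map_def eps_fst_def)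

lemma sw_eps_fst_tens: "sw T (\<lambda>x y. vsc (lfun e x) (tens y z)) = tens (eps_fst T) z"
  by (simp add: eps_fst_def)

lemma eps_fst_split_first: "(\<And>a. eps_fst (f a) = bas a) \<Longrightarrow> eps_fst (split_first f X) = X"
  by (rule lin_map_eqI[where F = "\<lambda>X. eps_fst (split_first f X)"])
     (simp_all add: split_paired_all split_first_def lin_reas_tens_left eps_fst_sw sw_eps_fst_tens tens_bas)

lemma eps_fst_split_mid: "eps_fst (split_mid f X) = split_first f (eps_fst X)"
  by (rule lin_map_eqI[where F = "\<lambda>X. eps_fst (split_mid f X)"])
     (simp_all add: split_paired_all split_mid_def split_first_def eps_fst_def)

lemma eps_fst_split_last: "eps_fst (split_last f X) = split_snd f (eps_fst X)"
  by (rule lin_map_eqI[where F = "\<lambda>X. eps_fst (split_last f X)"])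
     (simp_all add: split_paired_all split_last_def split_snd_def eps_fst_def)

lemma eps_fst_app1: "eps_fst (lin (app1 uH) X) = sw (eps_fst X) (\<lambda>b c. tens b (tens c uH))"
  by (rule lin_map_eqI[where F = "\<lambda>X. eps_fst (lin (app1 uH) X)"])
     (simp_all add: split_paired_all eps_fst_def)

lemma eps_last_split_snd: "(\<And>a. eps_snd (f a) = bas a) \<Longrightarrow> eps_last (split_snd f X) = X"
  by (rule lin_map_eqI[where F = "\<lambda>X. eps_last (split_snd f X)"])
     (simp_all add: split_paired_all split_snd_def eps_last_def flip: tens_bas)

lemma eps_last4_tens_left: "eps_last4 (tens x X) = tens x (eps_last X)"
  by (simp add: eps_last4_def)

lemma eps_last4_split_first: "eps_last4 (split_first f X) = split_first f (eps_last X)"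
  by (rule lin_map_eqI[where F = "\<lambda>X. eps_last4 (split_first f X)"])
     (simp_all add: split_paired_all split_first_def eps_last4_def eps_last_def eps_snd_def lin_reas_tens_left)

lemma eps_last4_split_mid: "eps_last4 (split_mid f X) = split_snd f (eps_last X)"
  by (rule lin_map_eqI[where F = "\<lambda>X. eps_last4 (split_mid f X)"])
     (simp_all add: split_paired_all split_mid_def split_snd_def eps_last4_def eps_last_def eps_snd_def
       sw_tens_right_eq)

lemma eps_last4_split_last: "(\<And>a. eps_snd (f a) = bas a) \<Longrightarrow> eps_last4 (split_last f X) = X"
  by (rule lin_map_eqI[where F = "\<lambda>X. eps_last4 (split_last f X)"])
     (simp_all add: split_paired_all split_last_def eps_last4_def eps_last_def flip: tens_bas)

lemma eps_last4_app1: "eps_last4 (lin (app1 uH) X) = X"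
  by (rule lin_map_eqI[where F = "\<lambda>X. eps_last4 (lin (app1 uH) X)"])
     (simp_all add: split_paired_all flip: tens_bas)

text \<open>Unlike \<open>\<Phi>\<^sub>\<lambda>\<close> and \<open>\<Phi>\<^sub>\<rho>\<close>, \<open>\<Phi>\<^sub>\<lambda>\<^sub>,\<^sub>\<rho>\<close> comes without a counit axiom: its
  normalisation is obtained by applying \<open>\<epsilon>\<close> to one factor of the two pentagon-type axioms
  and cancelling the invertible \<open>\<Phi>\<^sub>\<lambda>\<^sub>,\<^sub>\<rho>\<close>.\<close>

lemma eps_fst_Plr: "eps_fst Plr = tens uU uH"
proof -
  have "bilin M_HUH Plr (split_first lam (eps_fst Plr)) = Plr"
    using arg_cong[OF lr_pentagon_lam, of eps_fst]
    by (simp add: eps_fst_mult eps_fst_split_mid eps_fst_app1 eps_fst_split_last eps_fst_split_first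
        eps_fst_Pl split_snd_def assoc_algD[OF assoc_HUH])
  then have "split_first lam (eps_fst Plr) = tens uH (tens uU uH)"
    by (rule inv_pair_fix_right[OF assoc_HUH inv_Plr])
  then show ?thesis
    using eps_fst_split_first[of lam "eps_fst Plr"] by simp
qed

lemma eps_last_Plr: "eps_last Plr = tens uH uU"
proof -
  have "eps_last4 (split_first lam Pr) = tens uH (tens uU uH)"
    by (simp only: eps_last4_split_first eps_last_Pr) (simp add: split_first_def)
  then have "bilin M_HUH (split_snd rho (eps_last Plr)) Plr = Plr"
    using arg_cong[OF lr_pentagon_rho, of eps_last4]
    by (simp add: eps_last4_mult eps_last4_split_mid eps_last4_app1 eps_last4_split_last eps_last4_tens_left
        eps_last_Pr assoc_algD[OF assoc_HUH])
  then have "split_snd rho (eps_last Plr) = tens uH (tens uU uH)"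
    by (rule inv_pair_fix_left[OF assoc_HUH inv_Plr])
  then show ?thesis
    using eps_last_split_snd[of rho "eps_last Plr"] by simp
qed

lemma eps_fst_Plri: "eps_fst Plri = tens uU uH"
  by (rule hom_inv_pair_unit[where \<phi> = eps_fst, OF assoc_UH eps_fst_mult inv_Plr]) (simp_all add: eps_fst_Plr)

lemma eps_last_Plri: "eps_last Plri = tens uH uU"
  by (rule hom_inv_pair_unit[where \<phi> = eps_last, OF assoc_HU eps_last_mult inv_Plr]) (simp_all add: eps_last_Plr)

lemma sw_eps_fst: "sw T (\<lambda>a y. vsc (lfun e a) (sw y K)) = sw (eps_fst T) K"
  by (rule lin_map_eqI[where F = "\<lambda>T. sw T (\<lambda>a y. vsc (lfun e a) (sw y K))"])
     (simp_all add: split_paired_all eps_fst_def tens_bas)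

lemma sw3_eps_mid: "sw3 T (\<lambda>a b c. vsc (lfun e b) (K a c)) = sw (eps_mid T) K"
  by (rule lin_map_eqI[where F = "\<lambda>T. sw3 T (\<lambda>a b c. vsc (lfun e b) (K a c))"])
     (simp_all add: split_paired_all eps_mid_def tens_bas)

lemma sw3_eps_last: "sw3 T (\<lambda>a b c. vsc (lfun e c) (K a b)) = sw (eps_last T) K"
  by (rule lin_map_eqI[where F = "\<lambda>T. sw3 T (\<lambda>a b c. vsc (lfun e c) (K a b))"])
     (simp_all add: split_paired_all eps_last_def eps_snd_def tens_bas)

lemma sw_eps_snd: "lin_map K \<Longrightarrow> sw T (\<lambda>a b. vsc (lfun e b) (K a)) = K (eps_snd T)"
  by (rule lin_map_eqI[where F = "\<lambda>T. sw T (\<lambda>a b. vsc (lfun e b) (K a))"])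
     (auto simp: split_paired_all eps_snd_def lin_map_vsc intro: lin_map_comp)

lemma sw_eps_fst_lin_map: "lin_map K \<Longrightarrow> sw T (\<lambda>a b. vsc (lfun e a) (K b)) = K (eps_fst T)"
  by (rule lin_map_eqI[where F = "\<lambda>T. sw T (\<lambda>a b. vsc (lfun e a) (K b))"])
     (auto simp: split_paired_all eps_fst_def lin_map_vsc intro: lin_map_comp)

lemma SM_unit_left_bas: "bilin SM (tens uA uU) (bas (g, v)) = bas (g, v)"
  by (simp add: SM_tens smash_sw_def vsc_vsc[symmetric] sw_eps_fst sw3_eps_mid sw3_eps_last
      sw_eps_snd[where T = "rho v"] eps_fst_Pli eps_mid_Pri eps_last_Plri flip: tens_bas)

lemma SM_unit_right_bas: "bilin SM (bas (f, u)) (tens uA uU) = bas (f, u)"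
  by (simp add: SM_tens smash_sw_def vsc_vsc[symmetric] sw_eps_fst sw3_eps_mid sw3_eps_last
      sw_eps_fst_lin_map[where T = "lam u"] eps_mid_Pli eps_fst_Plri eps_last_Pri flip: tens_bas)

lemma assoc_alg_SM: "assoc_alg SM (tens uA uU)"
proof -
  have "bilin SM (tens uA uU) x = x" for x
    by (rule lin_map_eqI[where F = "\<lambda>x. bilin SM (tens uA uU) x"])
       (simp_all add: split_paired_all SM_unit_left_bas)
  moreover have "bilin SM x (tens uA uU) = x" for x
    by (rule lin_map_eqI[where F = "\<lambda>x. bilin SM x (tens uA uU)"])
       (simp_all add: split_paired_all SM_unit_right_bas)
  ultimately show ?thesis
    unfolding assoc_alg_def using SM_assoc by blast
qed

end

theorem mainTheorem1:
  fixes mH :: "'h \<Rightarrow> 'h \<Rightarrow> ('h \<Rightarrow>\<^sub>0 'k::field)" and uH :: "'h \<Rightarrow>\<^sub>0 'k"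
    and D :: "'h \<Rightarrow> ('h \<times> 'h \<Rightarrow>\<^sub>0 'k)" and e :: "'h \<Rightarrow> 'k"
    and Phi Phii :: "'h \<times> 'h \<times> 'h \<Rightarrow>\<^sub>0 'k"
    and la :: "'h \<Rightarrow> 'a \<Rightarrow> ('a \<Rightarrow>\<^sub>0 'k)" and ra :: "'a \<Rightarrow> 'h \<Rightarrow> ('a \<Rightarrow>\<^sub>0 'k)"
    and mA :: "'a \<Rightarrow> 'a \<Rightarrow> ('a \<Rightarrow>\<^sub>0 'k)" and uA :: "'a \<Rightarrow>\<^sub>0 'k"
    and mU :: "'u \<Rightarrow> 'u \<Rightarrow> ('u \<Rightarrow>\<^sub>0 'k)" and uU :: "'u \<Rightarrow>\<^sub>0 'k"
    and lam :: "'u \<Rightarrow> ('h \<times> 'u \<Rightarrow>\<^sub>0 'k)" and rho :: "'u \<Rightarrow> ('u \<times> 'h \<Rightarrow>\<^sub>0 'k)"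
    and Pl Pli :: "'h \<times> 'h \<times> 'u \<Rightarrow>\<^sub>0 'k"
    and Pr Pri :: "'u \<times> 'h \<times> 'h \<Rightarrow>\<^sub>0 'k"
    and Plr Plri :: "'h \<times> 'u \<times> 'h \<Rightarrow>\<^sub>0 'k"
  assumes "quasi_bialgebra mH uH D e Phi Phii"
    and "bimodule_algebra mH uH D e Phi Phii la ra mA uA"
    and "bicomodule_algebra mH uH D e Phi mU uU lam rho Pl Pli Pr Pri Plr Plri"
  shows "assoc_alg (smash_mult mH mU la ra mA lam rho Pli Plri Pri) (tens uA uU)"
proof -
  interpret lr_smash mH uH D e Phi Phii la ra mA uA mU uU lam rho Pl Pli Pr Pri Plr Plri
    using assms by unfold_locales
  show ?thesis
    by (rule assoc_alg_SM)
qed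

end
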